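(* Let $(M^{2n},J,g)$ be an almost Hermitian manifold, $X$ a unit real tangent vector, $\xi=\frac1{\sqrt2}(X-\sqrt{-1}JX)$, and $e_1=\xi,e_2,\dots,e_n$ a unitary $(1,0)$-frame. Then $R_{1\bar11\bar1}-\sum_{i=2}^n|\tau_{i1}^1+\tau_{i1}^{\bar1}|^2=R^L(X,JX,JX,X)-\|(\nabla_XJ)X\|^2.$
   Context: Almost Hermitian manifold: real dimension $2n$, almost complex structure $J$, Riemannian metric $g$ with $g(JX,JY)=g(X,Y)$. Operations extended complex-linearly; $\langle\cdot,\cdot\rangle$ the complex-bilinear extension of $g$; unitary frame: $\langle e_i,\bar e_j\rangle=\delta_{ij}$. $\nabla$ is the Levi-Civita connection; $D$ is the Chern connection, the unique connection with $DJ=0$, $Dg=0$ whose torsion $\tau(X,Y)=D_XY-D_YX-[X,Y]$ satisfies $\tau(\zeta,\bar\eta)=0$ for all $(1,0)$-vectors $\zeta,\eta$; $\tau(e_i,e_j)=\tau_{ij}^ke_k+\tau_{ij}^{\bar k}\bar e_k$. Curvatures: for a connection $\mathcal D$, $R(X,Y)=\mathcal D_X\mathcal D_Y-\mathcal D_Y\mathcal D_X-\mathcal D_{[X,Y]}$ and $R(X,Y,Z,W)=\langle R(X,Y)Z,W\rangle$; $R^L$ is this for $\nabla$ and $R$ for $D$, so $R^L(X,Y,Y,X)$ is the sectional curvature of orthonormal $X,Y$ and $R_{1\bar11\bar1}=R(e_1,\bar e_1,e_1,\bar e_1)$. *)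

theory Defs
  imports "HOL-Analysis.Analysis"
begin

text \<open>Local (chart) model: the manifold is an open set U of the Euclidean space real^'m.
  Vector fields are maps real^'m => real^'m; tensors are given pointwise.\<close>

fun dder :: "('a::real_normed_vector \<Rightarrow> 'b::real_normed_vector) \<Rightarrow> 'a list \<Rightarrow> 'a \<Rightarrow> 'b" where
  "dder f [] = f"
| "dder f (v # vs) = (\<lambda>p. frechet_derivative (dder f vs) (at p) v)"

definition smooth_on_set :: "'a set \<Rightarrow> ('a::real_normed_vector \<Rightarrow> 'b::real_normed_vector) \<Rightarrow> bool" where
  "smooth_on_set U f \<longleftrightarrow> (\<forall>vs. \<forall>p\<in>U. dder f vs differentiable (at p))"

text \<open>A connection is given by its Christoffel map Gamma: D_X Y = dY(X) + Gamma(X,Y).\<close>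
definition cov :: "('a::real_normed_vector \<Rightarrow> 'a \<Rightarrow> 'a \<Rightarrow> 'a) \<Rightarrow> ('a \<Rightarrow> 'a) \<Rightarrow> ('a \<Rightarrow> 'a) \<Rightarrow> 'a \<Rightarrow> 'a" where
  "cov \<Gamma> X Y = (\<lambda>p. frechet_derivative Y (at p) (X p) + \<Gamma> p (X p) (Y p))"

definition lie :: "('a::real_normed_vector \<Rightarrow> 'a) \<Rightarrow> ('a \<Rightarrow> 'a) \<Rightarrow> 'a \<Rightarrow> 'a" where
  "lie X Y = (\<lambda>p. frechet_derivative Y (at p) (X p) - frechet_derivative X (at p) (Y p))"

definition torsion :: "('a::real_normed_vector \<Rightarrow> 'a \<Rightarrow> 'a \<Rightarrow> 'a) \<Rightarrow> ('a \<Rightarrow> 'a) \<Rightarrow> ('a \<Rightarrow> 'a) \<Rightarrow> 'a \<Rightarrow> 'a" where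
  "torsion \<Gamma> X Y = (\<lambda>p. cov \<Gamma> X Y p - cov \<Gamma> Y X p - lie X Y p)"

definition curv :: "('a::real_normed_vector \<Rightarrow> 'a \<Rightarrow> 'a \<Rightarrow> 'a) \<Rightarrow> ('a \<Rightarrow> 'a) \<Rightarrow> ('a \<Rightarrow> 'a) \<Rightarrow> ('a \<Rightarrow> 'a) \<Rightarrow> 'a \<Rightarrow> 'a" where
  "curv \<Gamma> X Y Z = (\<lambda>p. cov \<Gamma> X (cov \<Gamma> Y Z) p - cov \<Gamma> Y (cov \<Gamma> X Z) p - cov \<Gamma> (lie X Y) Z p)"

text \<open>Tensors at a point, evaluated on vectors via (constant) extensions to vector fields.\<close>
definition tors_at :: "('a::real_normed_vector \<Rightarrow> 'a \<Rightarrow> 'a \<Rightarrow> 'a) \<Rightarrow> 'a \<Rightarrow> 'a \<Rightarrow> 'a \<Rightarrow> 'a" where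
  "tors_at \<Gamma> p u v = torsion \<Gamma> (\<lambda>_. u) (\<lambda>_. v) p"

definition curv4_at :: "('a \<Rightarrow> 'a \<Rightarrow> 'a \<Rightarrow> real) \<Rightarrow> ('a::real_normed_vector \<Rightarrow> 'a \<Rightarrow> 'a \<Rightarrow> 'a) \<Rightarrow> 'a \<Rightarrow> 'a \<Rightarrow> 'a \<Rightarrow> 'a \<Rightarrow> 'a \<Rightarrow> real" where
  "curv4_at g \<Gamma> p x y z w = g p (curv \<Gamma> (\<lambda>_. x) (\<lambda>_. y) (\<lambda>_. z) p) w"

definition cpl :: "real^'n \<Rightarrow> real^'n \<Rightarrow> complex^'n" where
  "cpl a b = (\<chi> i. Complex (a$i) (b$i))"
definition cre :: "complex^'n \<Rightarrow> real^'n" where "cre z = (\<chi> i. Re (z$i))"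
definition cim :: "complex^'n \<Rightarrow> real^'n" where "cim z = (\<chi> i. Im (z$i))"
definition cconj :: "complex^'n \<Rightarrow> complex^'n" where "cconj z = (\<chi> i. cnj (z$i))"

text \<open>Complex-linear extensions of real linear / bilinear / 4-linear objects.\<close>
definition cext1 :: "(real^'n \<Rightarrow> real^'n) \<Rightarrow> complex^'n \<Rightarrow> complex^'n" where
  "cext1 L z = cpl (L (cre z)) (L (cim z))"
definition cext2 :: "(real^'n \<Rightarrow> real^'n \<Rightarrow> real^'n) \<Rightarrow> complex^'n \<Rightarrow> complex^'n \<Rightarrow> complex^'n" where
  "cext2 B z w = cpl (B (cre z) (cre w) - B (cim z) (cim w)) (B (cre z) (cim w) + B (cim z) (cre w))"
definition cform2 :: "(real^'n \<Rightarrow> real^'n \<Rightarrow> real) \<Rightarrow> complex^'n \<Rightarrow> complex^'n \<Rightarrow> complex" where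
  "cform2 b z w = Complex (b (cre z) (cre w) - b (cim z) (cim w)) (b (cre z) (cim w) + b (cim z) (cre w))"
definition cpart :: "bool \<Rightarrow> complex^'n \<Rightarrow> real^'n" where
  "cpart b z = (if b then cim z else cre z)"
definition cform4 :: "(real^'n \<Rightarrow> real^'n \<Rightarrow> real^'n \<Rightarrow> real^'n \<Rightarrow> real) \<Rightarrow> complex^'n \<Rightarrow> complex^'n \<Rightarrow> complex^'n \<Rightarrow> complex^'n \<Rightarrow> complex" where
  "cform4 F z1 z2 z3 z4 = (\<Sum>b1\<in>UNIV. \<Sum>b2\<in>UNIV. \<Sum>b3\<in>UNIV. \<Sum>b4\<in>UNIV.
      (if b1 then \<i> else 1) * (if b2 then \<i> else 1) * (if b3 then \<i> else 1) * (if b4 then \<i> else 1)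
      * complex_of_real (F (cpart b1 z1) (cpart b2 z2) (cpart b3 z3) (cpart b4 z4)))"

definition is10 :: "(real^'n \<Rightarrow> real^'n \<Rightarrow> real^'n) \<Rightarrow> real^'n \<Rightarrow> complex^'n \<Rightarrow> bool" where
  "is10 J p \<zeta> \<longleftrightarrow> cext1 (J p) \<zeta> = \<i> *s \<zeta>"

definition almost_hermitian :: "(real^'n) set \<Rightarrow> (real^'n \<Rightarrow> real^'n \<Rightarrow> real^'n) \<Rightarrow> (real^'n \<Rightarrow> real^'n \<Rightarrow> real^'n \<Rightarrow> real) \<Rightarrow> bool" where
  "almost_hermitian U J g \<longleftrightarrow> open U \<and>
     (\<forall>p\<in>U. linear (J p) \<and> (\<forall>v. J p (J p v) = - v) \<and> bilinear (g p)
        \<and> (\<forall>v w. g p v w = g p w v) \<and> (\<forall>v. v \<noteq> 0 \<longrightarrow> g p v v > 0)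
        \<and> (\<forall>v w. g p (J p v) (J p w) = g p v w))
     \<and> (\<forall>u. smooth_on_set U (\<lambda>p. J p u)) \<and> (\<forall>u v. smooth_on_set U (\<lambda>p. g p u v))"

definition connection :: "(real^'n) set \<Rightarrow> (real^'n \<Rightarrow> real^'n \<Rightarrow> real^'n \<Rightarrow> real^'n) \<Rightarrow> bool" where
  "connection U \<Gamma> \<longleftrightarrow> (\<forall>p\<in>U. bilinear (\<Gamma> p)) \<and> (\<forall>u v. smooth_on_set U (\<lambda>p. \<Gamma> p u v))"

definition metric_compatible :: "(real^'n) set \<Rightarrow> (real^'n \<Rightarrow> real^'n \<Rightarrow> real^'n \<Rightarrow> real) \<Rightarrow> (real^'n \<Rightarrow> real^'n \<Rightarrow> real^'n \<Rightarrow> real^'n) \<Rightarrow> bool" where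
  "metric_compatible U g \<Gamma> \<longleftrightarrow> (\<forall>X Y Z. smooth_on_set U X \<longrightarrow> smooth_on_set U Y \<longrightarrow> smooth_on_set U Z \<longrightarrow>
     (\<forall>p\<in>U. frechet_derivative (\<lambda>q. g q (Y q) (Z q)) (at p) (X p)
              = g p (cov \<Gamma> X Y p) (Z p) + g p (Y p) (cov \<Gamma> X Z p)))"

definition levi_civita :: "(real^'n) set \<Rightarrow> (real^'n \<Rightarrow> real^'n \<Rightarrow> real^'n \<Rightarrow> real) \<Rightarrow> (real^'n \<Rightarrow> real^'n \<Rightarrow> real^'n \<Rightarrow> real^'n) \<Rightarrow> bool" where
  "levi_civita U g \<Gamma> \<longleftrightarrow> connection U \<Gamma> \<and> metric_compatible U g \<Gamma>
     \<and> (\<forall>X Y. smooth_on_set U X \<longrightarrow> smooth_on_set U Y \<longrightarrow> (\<forall>p\<in>U. torsion \<Gamma> X Y p = 0))"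

definition chern_connection :: "(real^'n) set \<Rightarrow> (real^'n \<Rightarrow> real^'n \<Rightarrow> real^'n) \<Rightarrow> (real^'n \<Rightarrow> real^'n \<Rightarrow> real^'n \<Rightarrow> real) \<Rightarrow> (real^'n \<Rightarrow> real^'n \<Rightarrow> real^'n \<Rightarrow> real^'n) \<Rightarrow> bool" where
  "chern_connection U J g \<Gamma> \<longleftrightarrow> connection U \<Gamma> \<and> metric_compatible U g \<Gamma>
     \<and> (\<forall>X Y. smooth_on_set U X \<longrightarrow> smooth_on_set U Y \<longrightarrow>
          (\<forall>p\<in>U. cov \<Gamma> X (\<lambda>q. J q (Y q)) p = J p (cov \<Gamma> X Y p)))
     \<and> (\<forall>p\<in>U. \<forall>\<zeta> \<eta>. is10 J p \<zeta> \<longrightarrow> is10 J p \<eta> \<longrightarrow> cext2 (tors_at \<Gamma> p) \<zeta> (cconj \<eta>) = 0)"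

end

theory Submission
  imports Defs
begin

(*
  Let A be the difference of the Chern and the Levi-Civita connection and P = A(X,X),
  Q = A(JX,JX), R = A(X,JX).  Computing both curvatures in a chart and comparing the second
  derivatives of g that the two metric connections produce, the derivatives of A cancel
  (using DJ = 0, the symmetry of the Levi-Civita connection and the vanishing of the
  (1,1)-part of the Chern torsion), leaving R^D(X,JX,JX,X) - R^L(X,JX,JX,X) = <P,Q> - |R|^2.
  Since (nabla_X J)X = JP - R and the torsion condition gives P - Q = 2JR, also
  |(nabla_X J)X|^2 = 2|P|^2 - <P,Q> + |R|^2.  On the torsion side, tau_{k1}^1 + tau_{k1}^{1bar}
  = 2(<P, Re e_k> + i <P, Im e_k>), which vanishes for k = 1 as P is orthogonal to X and JX;
  by Parseval over the real orthonormal basis sqrt 2 Re e_k, sqrt 2 Im e_k the torsion sum is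
  2|P|^2.  Finally R_{1 1bar 1 1bar} = R^D(X,JX,JX,X) by the skew-symmetries of R^D.
*)

section \<open>Smooth functions and connections in a chart\<close>

lemma dder_const: "dder (\<lambda>_. c) vs = (\<lambda>_. if vs = [] then c else 0)"
  by (induction vs) auto

lemma smooth_on_set_const: "smooth_on_set U (\<lambda>_. c)"
  unfolding smooth_on_set_def dder_const by simp

lemma smooth_on_set_differentiable:
  "smooth_on_set U f \<Longrightarrow> p \<in> U \<Longrightarrow> f differentiable (at p)"
  unfolding smooth_on_set_def by (drule spec[of _ "[]"]) simp

lemma smooth_on_set_differentiable_deriv:
  "smooth_on_set U f \<Longrightarrow> p \<in> U \<Longrightarrow> (\<lambda>q. frechet_derivative f (at q) u) differentiable (at p)"
  unfolding smooth_on_set_def by (drule spec[of _ "[u]"]) simp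

lemma smooth_on_set_differentiable_deriv2:
  "smooth_on_set U f \<Longrightarrow> p \<in> U \<Longrightarrow>
   (\<lambda>q. frechet_derivative (\<lambda>q. frechet_derivative f (at q) u) (at q) v) differentiable (at p)"
  unfolding smooth_on_set_def by (drule spec[of _ "[v, u]"]) simp

lemma metric_compatible_at:
  assumes "metric_compatible U g \<Gamma>" "p \<in> U"
  shows "frechet_derivative (\<lambda>q. g q a b) (at p) x = g p (\<Gamma> p x a) b + g p a (\<Gamma> p x b)"
  using assms unfolding metric_compatible_def
  by (force simp: cov_def dest: spec[of _ "\<lambda>_. x"] spec[of _ "\<lambda>_. a"] spec[of _ "\<lambda>_. b"]
      intro: smooth_on_set_const)

lemma chern_connection_deriv_J:
  assumes "chern_connection U J g \<Gamma>" "p \<in> U"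
  shows "frechet_derivative (\<lambda>q. J q a) (at p) x = J p (\<Gamma> p x a) - \<Gamma> p x (J p a)"
proof -
  have "cov \<Gamma> (\<lambda>_. x) (\<lambda>q. J q a) p = J p (cov \<Gamma> (\<lambda>_. x) (\<lambda>_. a) p)"
    using assms smooth_on_set_const unfolding chern_connection_def by blast
  then show ?thesis by (simp add: cov_def algebra_simps)
qed

lemma levi_civita_symmetric:
  assumes "levi_civita U g \<Gamma>" "p \<in> U"
  shows "\<Gamma> p a b = \<Gamma> p b a"
proof -
  have "torsion \<Gamma> (\<lambda>_. a) (\<lambda>_. b) p = 0"
    using assms smooth_on_set_const unfolding levi_civita_def by blast
  then show ?thesis by (simp add: cov_def torsion_def lie_def)
qed

lemma tors_at_eq: "tors_at \<Gamma> p u v = \<Gamma> p u v - \<Gamma> p v u"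
  by (simp add: tors_at_def torsion_def cov_def lie_def)

lemma curv4_at_eq:
  assumes "bilinear (\<Gamma> p)"
  shows "curv4_at g \<Gamma> p x y z w = g p (frechet_derivative (\<lambda>q. \<Gamma> q y z) (at p) x + \<Gamma> p x (\<Gamma> p y z)
        - frechet_derivative (\<lambda>q. \<Gamma> q x z) (at p) y - \<Gamma> p y (\<Gamma> p x z)) w"
  using assms by (simp add: curv4_at_def curv_def cov_def lie_def bilinear_lzero diff_diff_eq)

lemma bilinear_eq_sum_axis:
  fixes b :: "real^'m \<Rightarrow> real^'m \<Rightarrow> 'b::real_vector"
  assumes "bilinear b"
  shows "b v w = (\<Sum>i\<in>UNIV. \<Sum>j\<in>UNIV. (v$i * w$j) *\<^sub>R b (axis i 1) (axis j 1))"
proof -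
  have "b v w = b (\<Sum>i\<in>UNIV. (v$i) *\<^sub>R axis i 1) (\<Sum>j\<in>UNIV. (w$j) *\<^sub>R axis j 1)"
    using basis_expansion[of v] basis_expansion[of w] by (simp add: scalar_mult_eq_scaleR)
  also have "\<dots> = (\<Sum>(i,j)\<in>UNIV \<times> UNIV. b ((v$i) *\<^sub>R axis i 1) ((w$j) *\<^sub>R axis j 1))"
    by (rule bilinear_sum[OF assms])
  also have "\<dots> = (\<Sum>i\<in>UNIV. \<Sum>j\<in>UNIV. (v$i * w$j) *\<^sub>R b (axis i 1) (axis j 1))"
    by (simp add: bilinear_lmul[OF assms] bilinear_rmul[OF assms] mult.commute sum.cartesian_product)
  finally show ?thesis .
qed

text \<open>A family of bilinear maps is differentiated through its coordinate expansion
  \<open>B q v w = (\<Sum>i j. v\<^sub>i w\<^sub>j B q e\<^sub>i e\<^sub>j)\<close>.\<close>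
lemma has_derivative_bilinear_family_coords:
  fixes B :: "real^'m \<Rightarrow> real^'m \<Rightarrow> real^'m \<Rightarrow> 'b::real_normed_vector"
  assumes U: "open U" "p \<in> U" and bil: "\<forall>q\<in>U. bilinear (B q)"
    and dif: "\<And>a b. (\<lambda>q. B q a b) differentiable (at p)"
    and V: "(V has_derivative V') (at p)" and W: "(W has_derivative W') (at p)"
  shows "((\<lambda>q. B q (V q) (W q)) has_derivative (\<lambda>h. \<Sum>i\<in>UNIV. \<Sum>j\<in>UNIV.
      (V' h$i * W p$j + V p$i * W' h$j) *\<^sub>R B p (axis i 1) (axis j 1)
      + (V p$i * W p$j) *\<^sub>R frechet_derivative (\<lambda>q. B q (axis i 1) (axis j 1)) (at p) h)) (at p)"
proof -
  have Vi: "((\<lambda>q. V q $ i) has_derivative (\<lambda>h. V' h $ i)) (at p)" for i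
    using bounded_linear.has_derivative[OF bounded_linear_vec_nth V] .
  have Wi: "((\<lambda>q. W q $ i) has_derivative (\<lambda>h. W' h $ i)) (at p)" for i
    using bounded_linear.has_derivative[OF bounded_linear_vec_nth W] .
  have B: "((\<lambda>q. B q a b) has_derivative frechet_derivative (\<lambda>q. B q a b) (at p)) (at p)" for a b
    using dif frechet_derivative_works by blast
  have "((\<lambda>q. \<Sum>i\<in>UNIV. \<Sum>j\<in>UNIV. (V q$i * W q$j) *\<^sub>R B q (axis i 1) (axis j 1)) has_derivative
      (\<lambda>h. \<Sum>i\<in>UNIV. \<Sum>j\<in>UNIV.
        (V' h$i * W p$j + V p$i * W' h$j) *\<^sub>R B p (axis i 1) (axis j 1)
        + (V p$i * W p$j) *\<^sub>R frechet_derivative (\<lambda>q. B q (axis i 1) (axis j 1)) (at p) h)) (at p)"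
    apply (intro has_derivative_sum)
    apply (rule has_derivative_eq_rhs[OF has_derivative_scaleR[OF has_derivative_mult[OF Vi Wi] B]])
    apply (simp only: add.commute[of "(V p $ _ * W' _ $ _)"] add.commute[of "(V p $ _ * W p $ _) *\<^sub>R _"])
    done
  then show ?thesis
  proof (rule has_derivative_transform_within_open[OF _ U])
    fix q assume "q \<in> U"
    then show "(\<Sum>i\<in>UNIV. \<Sum>j\<in>UNIV. (V q$i * W q$j) *\<^sub>R B q (axis i 1) (axis j 1)) = B q (V q) (W q)"
      using bil bilinear_eq_sum_axis[of "B q", symmetric] by blast
  qed
qed

lemma frechet_derivative_bilinear_family:
  fixes B :: "real^'m \<Rightarrow> real^'m \<Rightarrow> real^'m \<Rightarrow> 'b::real_normed_vector"
  assumes U: "open U" "p \<in> U" and bil: "\<forall>q\<in>U. bilinear (B q)"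
    and dif: "\<And>a b. (\<lambda>q. B q a b) differentiable (at p)"
  shows "frechet_derivative (\<lambda>q. B q a b) (at p) h = (\<Sum>i\<in>UNIV. \<Sum>j\<in>UNIV.
      (a$i * b$j) *\<^sub>R frechet_derivative (\<lambda>q. B q (axis i 1) (axis j 1)) (at p) h)"
proof -
  have "((\<lambda>q. B q a b) has_derivative (\<lambda>h. \<Sum>i\<in>UNIV. \<Sum>j\<in>UNIV.
      (0 * b$j + a$i * 0) *\<^sub>R B p (axis i 1) (axis j 1)
      + (a$i * b$j) *\<^sub>R frechet_derivative (\<lambda>q. B q (axis i 1) (axis j 1)) (at p) h)) (at p)"
    using has_derivative_bilinear_family_coords[OF U bil dif, of "\<lambda>_. a" "\<lambda>_. 0" "\<lambda>_. b" "\<lambda>_. 0"]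
    by simp
  from fun_cong[OF frechet_derivative_at[OF this], of h, symmetric] show ?thesis by simp
qed

lemma has_derivative_bilinear_family:
  fixes B :: "real^'m \<Rightarrow> real^'m \<Rightarrow> real^'m \<Rightarrow> 'b::real_normed_vector"
  assumes U: "open U" "p \<in> U" and bil: "\<forall>q\<in>U. bilinear (B q)"
    and dif: "\<And>a b. (\<lambda>q. B q a b) differentiable (at p)"
    and V: "(V has_derivative V') (at p)" and W: "(W has_derivative W') (at p)"
  shows "((\<lambda>q. B q (V q) (W q)) has_derivative (\<lambda>h. frechet_derivative (\<lambda>q. B q (V p) (W p)) (at p) h
      + B p (V' h) (W p) + B p (V p) (W' h))) (at p)"
proof -
  have bp: "bilinear (B p)" using bil U by blast
  show ?thesis
    apply (rule has_derivative_eq_rhs[OF has_derivative_bilinear_family_coords[OF U bil dif V W]])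
    apply (rule ext)
    apply (subst frechet_derivative_bilinear_family[OF U bil dif, of "V p" "W p"])
    apply (subst bilinear_eq_sum_axis[OF bp, of "V' _"])
    apply (subst bilinear_eq_sum_axis[OF bp, of "V p" "W' _"])
    apply (simp only: scaleR_add_left sum.distrib add_ac)
    done
qed

section \<open>Symmetry of second derivatives\<close>

lemma has_derivative_along_line:
  fixes f :: "'a::real_normed_vector \<Rightarrow> real"
  assumes "f differentiable (at (a + s *\<^sub>R x))"
  shows "((\<lambda>s. f (a + s *\<^sub>R x)) has_derivative (\<lambda>t. t * frechet_derivative f (at (a + s *\<^sub>R x)) x)) (at s)"
proof -
  have line: "((\<lambda>s. a + s *\<^sub>R x) has_derivative (\<lambda>t. t *\<^sub>R x)) (at s)"
    by (auto intro!: derivative_eq_intros)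
  have f: "(f has_derivative frechet_derivative f (at (a + s *\<^sub>R x))) (at (a + s *\<^sub>R x))"
    using assms frechet_derivative_works by blast
  have lin: "linear (frechet_derivative f (at (a + s *\<^sub>R x)))"
    using assms linear_frechet_derivative by blast
  have "frechet_derivative f (at (a + s *\<^sub>R x)) \<circ> (\<lambda>t. t *\<^sub>R x)
      = (\<lambda>t. t * frechet_derivative f (at (a + s *\<^sub>R x)) x)"
    using linear_scale[OF lin] by (auto simp: fun_eq_iff)
  then show ?thesis
    using diff_chain_at[OF line f] by (simp add: o_def)
qed

lemma mvt_along_line:
  fixes f :: "'a::real_normed_vector \<Rightarrow> real"
  assumes "h \<ge> 0" and "\<And>s. 0 \<le> s \<Longrightarrow> s \<le> h \<Longrightarrow> f differentiable (at (a + s *\<^sub>R x))"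
  shows "\<exists>s. 0 \<le> s \<and> s \<le> h \<and> f (a + h *\<^sub>R x) - f a = h * frechet_derivative f (at (a + s *\<^sub>R x)) x"
proof -
  have "\<exists>s\<in>{0..h}. f (a + h *\<^sub>R x) - f (a + 0 *\<^sub>R x) = (h - 0) * frechet_derivative f (at (a + s *\<^sub>R x)) x"
  proof (rule mvt_very_simple[of 0 h "\<lambda>s. f (a + s *\<^sub>R x)" "\<lambda>s t. t * frechet_derivative f (at (a + s *\<^sub>R x)) x",
        simplified mult.commute])
    fix s assume "0 \<le> s" "s \<le> h"
    then show "((\<lambda>s. f (a + s *\<^sub>R x)) has_derivative (\<lambda>t. t * frechet_derivative f (at (a + s *\<^sub>R x)) x))
        (at s within {0..h})"
      using assms(2) has_derivative_along_line has_derivative_at_withinI by blast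
  qed (use assms(1) in simp)
  then show ?thesis by auto
qed

lemma dist_add_scaleR_less:
  fixes p x y :: "'a::real_normed_vector"
  assumes "0 \<le> s" "s \<le> h" "0 \<le> t" "t \<le> h" "h * (norm x + norm y) < d"
  shows "dist (p + s *\<^sub>R x + t *\<^sub>R y) p < d"
proof -
  have "norm (s *\<^sub>R x + t *\<^sub>R y) \<le> s * norm x + t * norm y"
    using assms by (metis abs_of_nonneg norm_scaleR norm_triangle_le order_refl add_mono)
  also have "\<dots> \<le> h * norm x + h * norm y"
    using assms by (intro add_mono mult_right_mono) auto
  also have "\<dots> < d" using assms by (simp add: algebra_simps)
  finally show ?thesis by (simp add: dist_norm add.assoc)
qed

lemma second_difference_mvt:
  fixes f :: "'a::real_normed_vector \<Rightarrow> real"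
  assumes B: "ball p d \<subseteq> U" and h: "h > 0" "h * (norm x + norm y) < d"
    and f: "\<forall>q\<in>U. f differentiable (at q)"
    and fx: "\<forall>q\<in>U. (\<lambda>q. frechet_derivative f (at q) x) differentiable (at q)"
  shows "\<exists>\<xi>. dist \<xi> p < d \<and> f (p + h *\<^sub>R x + h *\<^sub>R y) - f (p + h *\<^sub>R x) - f (p + h *\<^sub>R y) + f p
     = h * h * frechet_derivative (\<lambda>q. frechet_derivative f (at q) x) (at \<xi>) y"
proof -
  have inU: "p + s *\<^sub>R x + t *\<^sub>R y \<in> U" if "0 \<le> s" "s \<le> h" "0 \<le> t" "t \<le> h" for s t
    using dist_add_scaleR_less[OF that h(2)] B by (auto simp: dist_commute)
  define \<alpha> where "\<alpha> s = f ((p + h *\<^sub>R y) + s *\<^sub>R x) - f (p + s *\<^sub>R x)" for s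
  define fx' where "fx' = (\<lambda>q. frechet_derivative f (at q) x)"
  have "\<exists>s\<in>{0..h}. \<alpha> h - \<alpha> 0 = (h - 0) * (fx' ((p + h *\<^sub>R y) + s *\<^sub>R x) - fx' (p + s *\<^sub>R x))"
  proof (rule mvt_very_simple[of 0 h \<alpha> "\<lambda>s t. t * (fx' ((p + h *\<^sub>R y) + s *\<^sub>R x) - fx' (p + s *\<^sub>R x))",
        simplified mult.commute])
    fix s assume s: "0 \<le> s" "s \<le> h"
    have "f differentiable (at ((p + h *\<^sub>R y) + s *\<^sub>R x))" "f differentiable (at (p + s *\<^sub>R x))"
      using f inU[OF s, of h] inU[OF s, of 0] h by (simp_all add: algebra_simps)
    from has_derivative_diff[OF has_derivative_along_line[OF this(1)] has_derivative_along_line[OF this(2)]]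
    show "(\<alpha> has_derivative (\<lambda>t. t * (fx' ((p + h *\<^sub>R y) + s *\<^sub>R x) - fx' (p + s *\<^sub>R x)))) (at s within {0..h})"
      unfolding \<alpha>_def fx'_def by (simp add: right_diff_distrib has_derivative_at_withinI)
  qed (use h in simp)
  then obtain \<sigma> where \<sigma>: "0 \<le> \<sigma>" "\<sigma> \<le> h" and
     eq1: "\<alpha> h - \<alpha> 0 = h * (fx' ((p + h *\<^sub>R y) + \<sigma> *\<^sub>R x) - fx' (p + \<sigma> *\<^sub>R x))"
    by auto
  have "\<exists>t. 0 \<le> t \<and> t \<le> h \<and> fx' ((p + \<sigma> *\<^sub>R x) + h *\<^sub>R y) - fx' (p + \<sigma> *\<^sub>R x)
        = h * frechet_derivative fx' (at ((p + \<sigma> *\<^sub>R x) + t *\<^sub>R y)) y"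
    by (rule mvt_along_line) (use h fx inU \<sigma> fx'_def in auto)
  then obtain \<tau> where \<tau>: "0 \<le> \<tau>" "\<tau> \<le> h" and
    eq2: "fx' ((p + \<sigma> *\<^sub>R x) + h *\<^sub>R y) - fx' (p + \<sigma> *\<^sub>R x)
      = h * frechet_derivative fx' (at ((p + \<sigma> *\<^sub>R x) + \<tau> *\<^sub>R y)) y"
    by blast
  have "f (p + h *\<^sub>R x + h *\<^sub>R y) - f (p + h *\<^sub>R x) - f (p + h *\<^sub>R y) + f p = \<alpha> h - \<alpha> 0"
    unfolding \<alpha>_def by (simp add: algebra_simps)
  also have "\<dots> = h * h * frechet_derivative fx' (at (p + \<sigma> *\<^sub>R x + \<tau> *\<^sub>R y)) y"
    using eq1 eq2 by (simp add: algebra_simps)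
  finally show ?thesis
    using dist_add_scaleR_less[OF \<sigma> \<tau> h(2)] unfolding fx'_def by blast
qed

text \<open>Schwarz: both mixed derivatives are limits of the same second difference quotient.\<close>
lemma frechet_derivative_second_symmetric:
  fixes f :: "'a::real_normed_vector \<Rightarrow> real"
  assumes U: "open U" "p \<in> U"
    and f: "\<forall>q\<in>U. f differentiable (at q)"
    and fx: "\<forall>q\<in>U. (\<lambda>q. frechet_derivative f (at q) x) differentiable (at q)"
    and fy: "\<forall>q\<in>U. (\<lambda>q. frechet_derivative f (at q) y) differentiable (at q)"
    and cxy: "continuous (at p) (\<lambda>q. frechet_derivative (\<lambda>q. frechet_derivative f (at q) x) (at q) y)"
    and cyx: "continuous (at p) (\<lambda>q. frechet_derivative (\<lambda>q. frechet_derivative f (at q) y) (at q) x)"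
  shows "frechet_derivative (\<lambda>q. frechet_derivative f (at q) x) (at p) y
       = frechet_derivative (\<lambda>q. frechet_derivative f (at q) y) (at p) x"
    (is "?A p = ?B p")
proof (rule ccontr)
  assume ne: "?A p \<noteq> ?B p"
  define e where "e = \<bar>?A p - ?B p\<bar> / 2"
  have e: "e > 0" using ne unfolding e_def by simp
  obtain d1 where d1: "d1 > 0" "\<forall>q. dist q p < d1 \<longrightarrow> dist (?A q) (?A p) < e"
    using cxy e unfolding continuous_at_eps_delta by blast
  obtain d2 where d2: "d2 > 0" "\<forall>q. dist q p < d2 \<longrightarrow> dist (?B q) (?B p) < e"
    using cyx e unfolding continuous_at_eps_delta by blast
  obtain d3 where d3: "d3 > 0" "ball p d3 \<subseteq> U" using U open_contains_ball by blast
  define d where "d = min d1 (min d2 d3)"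
  have d: "d > 0" "ball p d \<subseteq> U" using d1 d2 d3 unfolding d_def by auto
  define h where "h = d / (2 * (norm x + norm y + 1))"
  have pos: "norm x + norm y + 1 > 0" by (simp add: add_nonneg_pos)
  have h: "h > 0" "h * (norm x + norm y) < d"
  proof -
    show "h > 0" unfolding h_def using d pos by simp
    have "h * (norm x + norm y) \<le> h * (norm x + norm y + 1)" using \<open>h > 0\<close> by simp
    also have "\<dots> = d / 2" unfolding h_def using pos by (simp add: field_simps)
    also have "\<dots> < d" using d by simp
    finally show "h * (norm x + norm y) < d" .
  qed
  obtain \<xi> where \<xi>: "dist \<xi> p < d" and
    E1: "f (p + h *\<^sub>R x + h *\<^sub>R y) - f (p + h *\<^sub>R x) - f (p + h *\<^sub>R y) + f p = h * h * ?A \<xi>"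
    using second_difference_mvt[OF d(2) h f fx] by blast
  obtain \<eta> where \<eta>: "dist \<eta> p < d" and
    E2: "f (p + h *\<^sub>R y + h *\<^sub>R x) - f (p + h *\<^sub>R y) - f (p + h *\<^sub>R x) + f p = h * h * ?B \<eta>"
    using second_difference_mvt[OF d(2), of h y x, OF h(1) _ f fy] h by (auto simp: add.commute)
  have "?A \<xi> = ?B \<eta>" using E1 E2 h by (simp add: algebra_simps)
  moreover have "dist (?A \<xi>) (?A p) < e" using d1 \<xi> unfolding d_def by auto
  moreover have "dist (?B \<eta>) (?B p) < e" using d2 \<eta> unfolding d_def by auto
  ultimately have "\<bar>?A p - ?B p\<bar> < 2 * e" by (simp add: dist_real_def)
  then show False unfolding e_def by simp
qed

section \<open>Complexification\<close>

lemma cre_cpl [simp]: "cre (cpl a b) = a" by (simp add: cre_def cpl_def vec_eq_iff)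
lemma cim_cpl [simp]: "cim (cpl a b) = b" by (simp add: cim_def cpl_def vec_eq_iff)
lemma cconj_cpl [simp]: "cconj (cpl a b) = cpl a (- b)"
  by (simp add: cconj_def cpl_def vec_eq_iff complex_eq_iff)
lemma cpl_eq_iff: "cpl a b = cpl c d \<longleftrightarrow> a = c \<and> b = d"
  by (auto simp: cpl_def vec_eq_iff complex_eq_iff)
lemma cpl_eq_0_iff: "cpl a b = 0 \<longleftrightarrow> a = 0 \<and> b = 0"
  by (auto simp: cpl_def vec_eq_iff complex_eq_iff)
lemma ii_scale_cpl: "\<i> *s cpl a b = cpl (- b) a"
  by (simp add: cpl_def vec_eq_iff complex_eq_iff)

lemma cre_add: "cre (z + w) = cre z + cre w" by (simp add: cre_def vec_eq_iff)
lemma cim_add: "cim (z + w) = cim z + cim w" by (simp add: cim_def vec_eq_iff)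
lemma cre_zero: "cre 0 = 0" by (simp add: cre_def vec_eq_iff)
lemma cim_zero: "cim 0 = 0" by (simp add: cim_def vec_eq_iff)
lemma cre_cconj: "cre (cconj z) = cre z" by (simp add: cre_def cconj_def vec_eq_iff)
lemma cim_cconj: "cim (cconj z) = - cim z" by (simp add: cim_def cconj_def vec_eq_iff)
lemma cre_scale: "cre (c *s z) = Re c *\<^sub>R cre z - Im c *\<^sub>R cim z"
  by (simp add: cre_def cim_def vec_eq_iff)
lemma cim_scale: "cim (c *s z) = Re c *\<^sub>R cim z + Im c *\<^sub>R cre z"
  by (simp add: cre_def cim_def vec_eq_iff)

context
  fixes b :: "real^'n \<Rightarrow> real^'n \<Rightarrow> real"
  assumes b: "bilinear b"
begin

lemma cform2_add: "cform2 b (z1 + z2) w = cform2 b z1 w + cform2 b z2 w"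
  unfolding cform2_def cre_add cim_add by (simp add: bilinear_ladd[OF b] complex_eq_iff)

lemma cform2_scale: "cform2 b (c *s z) w = c * cform2 b z w"
  unfolding cform2_def cre_scale cim_scale
  by (simp add: bilinear_ladd[OF b] bilinear_lsub[OF b] bilinear_lmul[OF b] complex_eq_iff algebra_simps)

lemma cform2_zero: "cform2 b 0 w = 0"
  unfolding cform2_def cre_zero cim_zero by (simp add: bilinear_lzero[OF b] complex_eq_iff)

lemma cform2_sum: "cform2 b (\<Sum>k\<in>K. f k) w = (\<Sum>k\<in>K. cform2 b (f k) w)"
  by (induction K rule: infinite_finite_induct) (simp_all add: cform2_zero cform2_add)

end

text \<open>For \<open>\<xi> = s (X - \<i> Y)\<close> and \<open>F\<close> skew in its first and in its last two arguments,
  of the sixteen terms of \<open>F (\<xi>, \<bar>\<xi>, \<xi>, \<bar>\<xi>)\<close> only the four multiples of \<open>F (X, Y, Y, X)\<close> survive.\<close>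
lemma cform4_cpl_skew:
  fixes F :: "real^'n \<Rightarrow> real^'n \<Rightarrow> real^'n \<Rightarrow> real^'n \<Rightarrow> real"
  assumes s1: "\<And>c a b d e. F (c *\<^sub>R a) b d e = c * F a b d e"
    and s2: "\<And>c a b d e. F a (c *\<^sub>R b) d e = c * F a b d e"
    and s3: "\<And>c a b d e. F a b (c *\<^sub>R d) e = c * F a b d e"
    and s4: "\<And>c a b d e. F a b d (c *\<^sub>R e) = c * F a b d e"
    and k1: "\<And>c d. F X X c d = 0" "\<And>c d. F Y Y c d = 0" "\<And>c d. F Y X c d = - F X Y c d"
    and k2: "\<And>a b. F a b X X = 0" "\<And>a b. F a b Y Y = 0" "\<And>a b. F a b Y X = - F a b X Y"
  shows "cform4 F (cpl (s *\<^sub>R X) (- (s *\<^sub>R Y))) (cconj (cpl (s *\<^sub>R X) (- (s *\<^sub>R Y))))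
      (cpl (s *\<^sub>R X) (- (s *\<^sub>R Y))) (cconj (cpl (s *\<^sub>R X) (- (s *\<^sub>R Y))))
    = complex_of_real (4 * s^4 * F X Y Y X)"
proof -
  have n1: "F (- a) b d e = - F a b d e" for a b d e using s1[where c="-1"] by simp
  have n2: "F a (- b) d e = - F a b d e" for a b d e using s2[where c="-1"] by simp
  have n3: "F a b (- d) e = - F a b d e" for a b d e using s3[where c="-1"] by simp
  have n4: "F a b d (- e) = - F a b d e" for a b d e using s4[where c="-1"] by simp
  show ?thesis
    unfolding cform4_def
    by (simp add: UNIV_bool cpart_def s1 s2 s3 s4 n1 n2 n3 n4 k1 k2 complex_eq_iff algebra_simps
        power4_eq_xxxx)
qed

lemma parseval_orthonormal:
  fixes gg :: "'a::euclidean_space \<Rightarrow> 'a \<Rightarrow> real" and f :: "'i \<Rightarrow> 'a"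
  assumes gb: "bilinear gg" and gs: "\<And>a b. gg a b = gg b a"
    and fin: "finite I" and card: "card I = DIM('a)"
    and orth: "\<And>k l. k \<in> I \<Longrightarrow> l \<in> I \<Longrightarrow> gg (f k) (f l) = (if k = l then 1 else 0)"
  shows "gg v v = (\<Sum>k\<in>I. (gg v (f k))\<^sup>2)"
proof -
  have inj: "inj_on f I"
  proof (rule inj_onI)
    fix k l assume "k \<in> I" "l \<in> I" "f k = f l"
    then show "k = l" using orth[of k k] orth[of k l] by (auto split: if_splits)
  qed
  define B where "B = f ` I"
  have finB: "finite B" unfolding B_def using fin by simp
  have cB: "card B = DIM('a)" unfolding B_def using card_image[OF inj] card by simp
  have lin: "linear (\<lambda>x. gg x w)" for w using gb unfolding bilinear_def by blast
  have coeff: "gg (\<Sum>b\<in>B. u b *\<^sub>R b) c = u c" if "c \<in> B" for u c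
  proof -
    have "gg (\<Sum>b\<in>B. u b *\<^sub>R b) c = (\<Sum>b\<in>B. u b * gg b c)"
      by (simp add: linear_sum[OF lin] linear_scale[OF lin])
    also have "\<dots> = (\<Sum>b\<in>B. if b = c then u b else 0)"
    proof (rule sum.cong[OF refl])
      fix b assume "b \<in> B"
      then obtain k l where "k \<in> I" "l \<in> I" "b = f k" "c = f l"
        using \<open>c \<in> B\<close> unfolding B_def by blast
      then show "u b * gg b c = (if b = c then u b else 0)"
        using orth[of k l] inj_onD[OF inj, of k l] by auto
    qed
    also have "\<dots> = u c" using finB that by simp
    finally show ?thesis .
  qed
  have "independent B"
    unfolding dependent_finite[OF finB]
  proof
    assume "\<exists>u. (\<exists>v\<in>B. u v \<noteq> 0) \<and> (\<Sum>v\<in>B. u v *\<^sub>R v) = 0"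
    then obtain u c where "c \<in> B" "u c \<noteq> 0" "(\<Sum>v\<in>B. u v *\<^sub>R v) = 0" by blast
    then show False using coeff[of c u] bilinear_lzero[OF gb] by simp
  qed
  then have "UNIV \<subseteq> span B"
    by (intro card_ge_dim_independent) (use cB in auto)
  then obtain u where u: "v = (\<Sum>b\<in>B. u b *\<^sub>R b)" unfolding span_finite[OF finB] by auto
  have "gg v v = (\<Sum>b\<in>B. u b * gg b v)"
    by (subst (1) u) (simp add: linear_sum[OF lin] linear_scale[OF lin])
  also have "\<dots> = (\<Sum>b\<in>B. (gg v b)\<^sup>2)"
    by (rule sum.cong[OF refl]) (use coeff u gs in \<open>auto simp: power2_eq_square\<close>)
  also have "\<dots> = (\<Sum>k\<in>I. (gg v (f k))\<^sup>2)"
    unfolding B_def by (rule sum.reindex[OF inj, unfolded o_def])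
  finally show ?thesis .
qed

section \<open>The two connections at a point\<close>

text \<open>Christoffel maps at one point of a Levi-Civita connection \<open>G\<close> and a Chern connection
  \<open>\<Gamma>\<close> of an almost Hermitian metric \<open>gg\<close>; \<open>torsion_no_11\<close> is the vanishing of the
  (1,1)-part of the torsion of \<open>\<Gamma>\<close>.\<close>
locale chern_pointwise =
  fixes gg :: "real^'m \<Rightarrow> real^'m \<Rightarrow> real" and JJ :: "real^'m \<Rightarrow> real^'m"
    and G \<Gamma> :: "real^'m \<Rightarrow> real^'m \<Rightarrow> real^'m"
  assumes gg_bilinear: "bilinear gg" and gg_sym: "gg a b = gg b a" and JJ_linear: "linear JJ"
    and JJ_JJ: "JJ (JJ v) = - v" and gg_JJ: "gg (JJ a) (JJ b) = gg a b"
    and G_bilinear: "bilinear G" and G_sym: "G a b = G b a" and \<Gamma>_bilinear: "bilinear \<Gamma>"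
    and both_metric: "gg (\<Gamma> u a) b + gg a (\<Gamma> u b) = gg (G u a) b + gg a (G u b)"
    and torsion_no_11: "(\<Gamma> a b - \<Gamma> b a) + (\<Gamma> (JJ a) (JJ b) - \<Gamma> (JJ b) (JJ a)) = 0"
begin

lemmas gg_lin = bilinear_ladd[OF gg_bilinear] bilinear_radd[OF gg_bilinear]
  bilinear_lsub[OF gg_bilinear] bilinear_rsub[OF gg_bilinear]
  bilinear_lneg[OF gg_bilinear] bilinear_rneg[OF gg_bilinear]
  bilinear_lmul[OF gg_bilinear] bilinear_rmul[OF gg_bilinear]
  bilinear_lzero[OF gg_bilinear] bilinear_rzero[OF gg_bilinear]
lemmas G_lin = bilinear_ladd[OF G_bilinear] bilinear_radd[OF G_bilinear]
  bilinear_lsub[OF G_bilinear] bilinear_rsub[OF G_bilinear]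
  bilinear_lneg[OF G_bilinear] bilinear_rneg[OF G_bilinear]
  bilinear_lmul[OF G_bilinear] bilinear_rmul[OF G_bilinear]
  bilinear_lzero[OF G_bilinear] bilinear_rzero[OF G_bilinear]
lemmas \<Gamma>_lin = bilinear_ladd[OF \<Gamma>_bilinear] bilinear_radd[OF \<Gamma>_bilinear]
  bilinear_lsub[OF \<Gamma>_bilinear] bilinear_rsub[OF \<Gamma>_bilinear]
  bilinear_lneg[OF \<Gamma>_bilinear] bilinear_rneg[OF \<Gamma>_bilinear]
  bilinear_lmul[OF \<Gamma>_bilinear] bilinear_rmul[OF \<Gamma>_bilinear]
  bilinear_lzero[OF \<Gamma>_bilinear] bilinear_rzero[OF \<Gamma>_bilinear]
lemmas JJ_lin = linear_add[OF JJ_linear] linear_diff[OF JJ_linear] linear_neg[OF JJ_linear]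
  linear_scale[OF JJ_linear] linear_0[OF JJ_linear]
lemmas lin_simps = gg_lin G_lin \<Gamma>_lin JJ_lin JJ_JJ

lemma g_J_skew: "gg (JJ a) b = - gg a (JJ b)"
proof -
  have "gg (JJ a) b = gg (JJ (JJ a)) (JJ b)" by (simp add: gg_JJ)
  then show ?thesis by (simp add: JJ_JJ gg_lin)
qed

lemma g_chern_self: "gg (\<Gamma> u a) a = gg (G u a) a"
  using both_metric[of u a a] gg_sym[of a "\<Gamma> u a"] gg_sym[of a "G u a"] by simp

lemma chern_J_commute: "\<Gamma> a (JJ a) = \<Gamma> (JJ a) a"
proof -
  have "\<Gamma> (JJ a) (JJ (JJ a)) - \<Gamma> (JJ (JJ a)) (JJ a) = \<Gamma> a (JJ a) - \<Gamma> (JJ a) a"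
    by (simp add: JJ_JJ \<Gamma>_lin)
  then have "(\<Gamma> a (JJ a) - \<Gamma> (JJ a) a) + (\<Gamma> a (JJ a) - \<Gamma> (JJ a) a) = 0"
    using torsion_no_11[of a "JJ a"] by simp
  then show ?thesis by (simp add: vec_eq_iff)
qed

lemma torsion_J: "\<Gamma> a b - \<Gamma> b a = - (\<Gamma> (JJ a) (JJ b) - \<Gamma> (JJ b) (JJ a))"
  by (subst eq_neg_iff_add_eq_0) (rule torsion_no_11)

lemma g_torsion_self: "gg a (\<Gamma> a v - \<Gamma> v a) = - (gg (\<Gamma> a a) v - gg (G a a) v)"
proof -
  have "gg a (\<Gamma> v a) = gg a (G v a)" using g_chern_self[of v a] gg_sym by metis
  then show ?thesis using both_metric[of a a v] G_sym[of v a] by (simp add: gg_lin)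
qed

lemma g_J_torsion_self:
  "gg (JJ a) (\<Gamma> a v - \<Gamma> v a) = gg (\<Gamma> (JJ a) (JJ a)) (JJ v) - gg (G (JJ a) (JJ a)) (JJ v)"
proof -
  have "gg (JJ a) (\<Gamma> a v - \<Gamma> v a) = - gg (JJ a) (\<Gamma> (JJ a) (JJ v) - \<Gamma> (JJ v) (JJ a))"
    unfolding torsion_J[of a v] by (simp add: gg_lin)
  then show ?thesis using g_torsion_self[of "JJ a" "JJ v"] by simp
qed

lemma g_torsion_J_self:
  "gg a (\<Gamma> (JJ a) v - \<Gamma> v (JJ a)) = - (gg (\<Gamma> a a) (JJ v) - gg (G a a) (JJ v))"
proof -
  have "\<Gamma> (JJ a) v - \<Gamma> v (JJ a) = - (\<Gamma> (JJ (JJ a)) (JJ v) - \<Gamma> (JJ v) (JJ (JJ a)))" by (rule torsion_J)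
  also have "\<dots> = \<Gamma> a (JJ v) - \<Gamma> (JJ v) a" by (simp add: JJ_JJ \<Gamma>_lin)
  finally show ?thesis using g_torsion_self[of a "JJ v"] by simp
qed

lemma difference_tensor_J:
  "gg (\<Gamma> X X - G X X) w - gg (\<Gamma> (JJ X) (JJ X) - G (JJ X) (JJ X)) w
   = 2 * gg (JJ (\<Gamma> X (JJ X) - G X (JJ X))) w"
proof -
  have h1: "gg (JJ (\<Gamma> X (JJ X) - G X (JJ X))) w = - gg (\<Gamma> X (JJ X) - G X (JJ X)) (JJ w)"
    by (rule g_J_skew)
  have h2: "gg (\<Gamma> X (JJ X)) (JJ w) + gg (JJ X) (\<Gamma> X (JJ w)) = gg (G X (JJ X)) (JJ w) + gg (JJ X) (G X (JJ w))"
    by (rule both_metric)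
  have h3: "gg (\<Gamma> (JJ X) X) (JJ w) + gg X (\<Gamma> (JJ X) (JJ w)) = gg (G (JJ X) X) (JJ w) + gg X (G (JJ X) (JJ w))"
    by (rule both_metric)
  have h4: "gg (\<Gamma> (JJ w) X) (JJ X) + gg X (\<Gamma> (JJ w) (JJ X)) = gg (G (JJ w) X) (JJ X) + gg X (G (JJ w) (JJ X))"
    by (rule both_metric)
  have t1: "\<Gamma> (JJ X) w - \<Gamma> w (JJ X) = - (\<Gamma> (JJ (JJ X)) (JJ w) - \<Gamma> (JJ w) (JJ (JJ X)))"
    by (rule torsion_J)
  have t2: "\<Gamma> X w - \<Gamma> w X = - (\<Gamma> (JJ X) (JJ w) - \<Gamma> (JJ w) (JJ X))"
    by (rule torsion_J)
  have b1: "gg (JJ X) (\<Gamma> (JJ X) w - \<Gamma> w (JJ X)) = gg (JJ X) (\<Gamma> X (JJ w) - \<Gamma> (JJ w) X)"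
    using t1 by (simp add: lin_simps)
  have b2: "gg X (\<Gamma> X w - \<Gamma> w X) = - gg X (\<Gamma> (JJ X) (JJ w) - \<Gamma> (JJ w) (JJ X))"
    using t2 by (simp add: lin_simps)
  show ?thesis
    using h1 h2 h3 h4 b1 b2 chern_J_commute[of X] g_torsion_self[of X w] g_torsion_self[of "JJ X" w]
      G_sym[of "JJ X" X] G_sym[of "JJ w" X] G_sym[of "JJ w" "JJ X"]
    by (simp add: lin_simps gg_sym[of X] gg_sym[of "JJ X"])
qed

text \<open>The part of \<open>\<partial>\<^sub>x\<partial>\<^sub>y gg(z, w)\<close> that is quadratic in the Christoffel symbols,
  for \<open>\<Gamma>\<close> minus for \<open>G\<close>.\<close>
definition quadratic_defect :: "real^'m \<Rightarrow> real^'m \<Rightarrow> real^'m \<Rightarrow> real^'m \<Rightarrow> real" where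
  "quadratic_defect x y z w = gg (\<Gamma> x (\<Gamma> y z)) w + gg (\<Gamma> y z) (\<Gamma> x w)
         + gg (\<Gamma> x z) (\<Gamma> y w) + gg z (\<Gamma> x (\<Gamma> y w))
       - (gg (G x (G y z)) w + gg (G y z) (G x w) + gg (G x z) (G y w) + gg z (G x (G y w)))"

text \<open>\<open>dD\<close>, \<open>dL\<close> stand for the derivatives of \<open>\<Gamma>\<close> and \<open>G\<close>; \<open>v u\<close> is the derivative of the
  field \<open>JJ X\<close> along \<open>u\<close>, and \<open>e1\<close> the derivative of \<open>\<Gamma> X (JJ X) = \<Gamma> (JJ X) X\<close>.\<close>
lemma curvature_difference_derivative_free:
  fixes X :: "real^'m" and dD dL :: "real^'m \<Rightarrow> real^'m \<Rightarrow> real^'m \<Rightarrow> real^'m"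
  defines "Y \<equiv> JJ X" and "v \<equiv> \<lambda>u. JJ (\<Gamma> u X) - \<Gamma> u (JJ X)"
  assumes meq: "\<And>x y z w. gg (\<Gamma> x (\<Gamma> y z)) w + gg (\<Gamma> y z) (\<Gamma> x w) + gg (dD x y z) w
         + gg (\<Gamma> x z) (\<Gamma> y w) + gg z (\<Gamma> x (\<Gamma> y w)) + gg z (dD x y w)
       = gg (G x (G y z)) w + gg (G y z) (G x w) + gg (dL x y z) w
         + gg (G x z) (G y w) + gg z (G x (G y w)) + gg z (dL x y w)"
    and e1: "\<And>u. dD u X Y + \<Gamma> X (v u) - (dD u Y X + \<Gamma> (v u) X) = 0"
    and dL_sym: "\<And>u a b. dL u a b = dL u b a"
  shows "gg (dD X Y Y + \<Gamma> X (\<Gamma> Y Y) - dD Y X Y - \<Gamma> Y (\<Gamma> X Y)) X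
       - gg (dL X Y Y + G X (G Y Y) - dL Y X Y - G Y (G X Y)) X
     = quadratic_defect X X Y Y / 2 - quadratic_defect X Y Y X + quadratic_defect Y Y X X / 2
       - gg (\<Gamma> X (v X) - \<Gamma> (v X) X) Y + gg (\<Gamma> X (v Y) - \<Gamma> (v Y) X) X
       + (gg (\<Gamma> X (\<Gamma> Y Y) - \<Gamma> Y (\<Gamma> X Y)) X - gg (G X (G Y Y) - G Y (G X Y)) X)"
proof -
  have m: "gg (dD x y z - dL x y z) w + gg z (dD x y w - dL x y w) = - quadratic_defect x y z w"
    for x y z w
    using meq[of x y z w] unfolding quadratic_defect_def by (simp add: gg_lin)
  have "(dD X X Y - dL X X Y) - (dD X Y X - dL X Y X) = - (\<Gamma> X (v X) - \<Gamma> (v X) X)"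
    using e1[of X] dL_sym[of X X Y] by (simp add: algebra_simps)
  from arg_cong[OF this, of "\<lambda>v. gg v Y"]
  have s1: "gg (dD X X Y - dL X X Y) Y - gg (dD X Y X - dL X Y X) Y = - gg (\<Gamma> X (v X) - \<Gamma> (v X) X) Y"
    by (simp add: gg_lin)
  have "(dD Y X Y - dL Y X Y) - (dD Y Y X - dL Y Y X) = - (\<Gamma> X (v Y) - \<Gamma> (v Y) X)"
    using e1[of Y] dL_sym[of Y X Y] by (simp add: algebra_simps)
  from arg_cong[OF this, of "\<lambda>v. gg v X"]
  have s2: "gg (dD Y X Y - dL Y X Y) X - gg (dD Y Y X - dL Y Y X) X = - gg (\<Gamma> X (v Y) - \<Gamma> (v Y) X) X"
    by (simp add: gg_lin)
  show ?thesis
    using m[of X Y Y X] m[of X X Y Y] m[of Y Y X X] s1 s2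
      gg_sym[of Y "dD X Y X - dL X Y X"] gg_sym[of Y "dD X X Y - dL X X Y"] gg_sym[of X "dD Y Y X - dL Y Y X"]
    by (simp add: gg_lin)
qed

lemma quadratic_terms_eq:
  fixes X :: "real^'m"
  defines "Y \<equiv> JJ X" and "v \<equiv> \<lambda>u. JJ (\<Gamma> u X) - \<Gamma> u (JJ X)"
  shows "quadratic_defect X X Y Y / 2 - quadratic_defect X Y Y X + quadratic_defect Y Y X X / 2
       - gg (\<Gamma> X (v X) - \<Gamma> (v X) X) Y + gg (\<Gamma> X (v Y) - \<Gamma> (v Y) X) X
       + (gg (\<Gamma> X (\<Gamma> Y Y) - \<Gamma> Y (\<Gamma> X Y)) X - gg (G X (G Y Y) - G Y (G X Y)) X)
     = gg (\<Gamma> X X - G X X) (\<Gamma> Y Y - G Y Y) - gg (\<Gamma> X Y - G X Y) (\<Gamma> X Y - G X Y)"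
proof -
  have v: "v u = JJ (\<Gamma> u X) - \<Gamma> u Y" for u unfolding v_def Y_def ..
  define P where "P = \<Gamma> X X - G X X"
  define Q where "Q = \<Gamma> Y Y - G Y Y"
  define R where "R = \<Gamma> X Y - G X Y"
  define dg where "dg x a b = gg (G x a) b + gg a (G x b)" for x a b
  have tj: "\<Gamma> Y X = \<Gamma> X Y" unfolding Y_def using chern_J_commute[of X] by simp
  have RR: "\<Gamma> Y X - G Y X = R" unfolding R_def using tj G_sym[of X Y] by simp
  have mg1: "quadratic_defect X X Y Y = 2 * dg X R Y"
    using both_metric[of X "\<Gamma> X Y" Y] both_metric[of X Y "\<Gamma> X Y"] unfolding quadratic_defect_def dg_def R_def
    by (simp add: lin_simps gg_sym[of Y])
  have mg2: "quadratic_defect Y Y X X = 2 * dg Y R X"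
    using both_metric[of Y "\<Gamma> Y X" X] both_metric[of Y X "\<Gamma> Y X"] unfolding quadratic_defect_def dg_def RR[symmetric]
    by (simp add: lin_simps gg_sym[of X])
  have mg3: "quadratic_defect X Y Y X = dg X Q X + dg X Y R"
    using both_metric[of X "\<Gamma> Y Y" X] both_metric[of X Y "\<Gamma> Y X"] unfolding quadratic_defect_def dg_def RR[symmetric] Q_def
    by (simp add: lin_simps)
  have tg1: "gg (\<Gamma> X (v X) - \<Gamma> (v X) X) Y = gg Q (JJ (v X))"
    using g_J_torsion_self[of X "v X"] unfolding Q_def Y_def by (simp add: gg_sym[of "JJ X"] gg_lin)
  have tg2: "gg (\<Gamma> X (v Y) - \<Gamma> (v Y) X) X = - gg P (v Y)"
    using g_torsion_self[of X "v Y"] unfolding P_def by (simp add: gg_sym[of X] gg_lin)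
  have qd: "gg (\<Gamma> X (\<Gamma> Y Y) - \<Gamma> Y (\<Gamma> X Y)) X - gg (G X (G Y Y) - G Y (G X Y)) X
      = gg (G X Q) X + gg (\<Gamma> Y Y) (G X X) - gg (\<Gamma> Y Y) (\<Gamma> X X)
      - gg (G Y R) X - gg (\<Gamma> X Y) (G Y X) + gg (\<Gamma> X Y) (\<Gamma> Y X)"
    using both_metric[of X "\<Gamma> Y Y" X] both_metric[of Y "\<Gamma> X Y" X] unfolding Q_def R_def
    by (simp add: lin_simps)
  have k: "gg P (JJ (\<Gamma> X Y)) - gg Q (JJ (\<Gamma> X Y)) = 2 * gg R (\<Gamma> X Y)"
    using difference_tensor_J[of X "JJ (\<Gamma> X Y)"] gg_JJ unfolding P_def Q_def R_def Y_def by simp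
  show ?thesis
    unfolding mg1 mg2 mg3 tg1 tg2 qd
    using k unfolding dg_def v P_def Q_def R_def
    apply (simp add: lin_simps gg_sym gg_JJ tj G_sym[of Y X])
    apply (simp add: field_simps)
    done
qed

lemma curvature_difference_pointwise:
  fixes X :: "real^'m" and dD dL :: "real^'m \<Rightarrow> real^'m \<Rightarrow> real^'m \<Rightarrow> real^'m"
  defines "Y \<equiv> JJ X"
  assumes "\<And>x y z w. gg (\<Gamma> x (\<Gamma> y z)) w + gg (\<Gamma> y z) (\<Gamma> x w) + gg (dD x y z) w
         + gg (\<Gamma> x z) (\<Gamma> y w) + gg z (\<Gamma> x (\<Gamma> y w)) + gg z (dD x y w)
       = gg (G x (G y z)) w + gg (G y z) (G x w) + gg (dL x y z) w
         + gg (G x z) (G y w) + gg z (G x (G y w)) + gg z (dL x y w)"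
    and "\<And>u. dD u X Y + \<Gamma> X (JJ (\<Gamma> u X) - \<Gamma> u Y) - (dD u Y X + \<Gamma> (JJ (\<Gamma> u X) - \<Gamma> u Y) X) = 0"
    and "\<And>u a b. dL u a b = dL u b a"
  shows "gg (dD X Y Y + \<Gamma> X (\<Gamma> Y Y) - dD Y X Y - \<Gamma> Y (\<Gamma> X Y)) X
       - gg (dL X Y Y + G X (G Y Y) - dL Y X Y - G Y (G X Y)) X
       = gg (\<Gamma> X X - G X X) (\<Gamma> Y Y - G Y Y) - gg (\<Gamma> X Y - G X Y) (\<Gamma> X Y - G X Y)"
  using curvature_difference_derivative_free[OF assms(2-4)[unfolded Y_def]] quadratic_terms_eq
  unfolding Y_def by simp

lemma g_difference_self: "gg (\<Gamma> X X - G X X) X = 0"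
  using g_chern_self[of X X] by (simp add: gg_lin)

lemma g_difference_J_self: "gg (\<Gamma> X X - G X X) (JJ X) = 0"
  using both_metric[of X X "JJ X"] chern_J_commute[of X] g_chern_self[of "JJ X" X] G_sym[of X "JJ X"]
    gg_sym[of X "\<Gamma> (JJ X) X"] gg_sym[of X "G (JJ X) X"]
  by (simp add: gg_lin)

lemma g_J_difference_minus_difference:
  fixes X :: "real^'m"
  defines "P \<equiv> \<Gamma> X X - G X X" and "Q \<equiv> \<Gamma> (JJ X) (JJ X) - G (JJ X) (JJ X)"
    and "R \<equiv> \<Gamma> X (JJ X) - G X (JJ X)"
  shows "gg (JJ P - R) (JJ P - R) = 2 * gg P P - gg P Q + gg R R"
proof -
  have "gg P P - gg Q P = 2 * gg (JJ R) P"
    using difference_tensor_J[of X P] unfolding P_def Q_def R_def .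
  then show ?thesis
    using g_J_skew[of R P] gg_sym[of Q P] by (simp add: gg_lin gg_JJ gg_sym[of "JJ P" R])
qed

end

section \<open>Curvature of the Chern and the Levi-Civita connection\<close>

abbreviation fderiv :: "('a::real_normed_vector \<Rightarrow> 'b::real_normed_vector) \<Rightarrow> 'a \<Rightarrow> 'a \<Rightarrow> 'b" where
  "fderiv f p u \<equiv> frechet_derivative f (at p) u"

locale chern_levi_civita =
  fixes U :: "(real^'m) set" and J :: "real^'m \<Rightarrow> real^'m \<Rightarrow> real^'m"
    and g :: "real^'m \<Rightarrow> real^'m \<Rightarrow> real^'m \<Rightarrow> real"
    and GL GD :: "real^'m \<Rightarrow> real^'m \<Rightarrow> real^'m \<Rightarrow> real^'m"
  assumes almost_hermitian: "almost_hermitian U J g"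
    and levi_civita: "levi_civita U g GL"
    and chern: "chern_connection U J g GD"
begin

lemma open_U: "open U"
  using almost_hermitian unfolding almost_hermitian_def by blast
lemma J_linear: "q \<in> U \<Longrightarrow> linear (J q)"
  using almost_hermitian unfolding almost_hermitian_def by blast
lemma J_J: "q \<in> U \<Longrightarrow> J q (J q v) = - v"
  using almost_hermitian unfolding almost_hermitian_def by blast
lemma g_bilinear: "q \<in> U \<Longrightarrow> bilinear (g q)"
  using almost_hermitian unfolding almost_hermitian_def by blast
lemma g_sym: "q \<in> U \<Longrightarrow> g q v w = g q w v"
  using almost_hermitian unfolding almost_hermitian_def by blast
lemma g_J: "q \<in> U \<Longrightarrow> g q (J q v) (J q w) = g q v w"
  using almost_hermitian unfolding almost_hermitian_def by blast
lemma J_smooth: "smooth_on_set U (\<lambda>p. J p u)"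
  using almost_hermitian unfolding almost_hermitian_def by blast
lemma g_smooth: "smooth_on_set U (\<lambda>p. g p u v)"
  using almost_hermitian unfolding almost_hermitian_def by blast
lemma GL_metric: "metric_compatible U g GL"
  using levi_civita unfolding levi_civita_def by blast
lemma GD_metric: "metric_compatible U g GD"
  using chern unfolding chern_connection_def by blast
lemma GL_bilinear: "q \<in> U \<Longrightarrow> bilinear (GL q)"
  using levi_civita unfolding levi_civita_def connection_def by blast
lemma GD_bilinear: "q \<in> U \<Longrightarrow> bilinear (GD q)"
  using chern unfolding chern_connection_def connection_def by blast
lemma GL_smooth: "smooth_on_set U (\<lambda>p. GL p u v)"
  using levi_civita unfolding levi_civita_def connection_def by blast
lemma GD_smooth: "smooth_on_set U (\<lambda>p. GD p u v)"
  using chern unfolding chern_connection_def connection_def by blast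

lemma g_differentiable: "q \<in> U \<Longrightarrow> (\<lambda>p. g p a b) differentiable (at q)"
  using smooth_on_set_differentiable[OF g_smooth] .
lemma J_differentiable: "q \<in> U \<Longrightarrow> (\<lambda>p. J p a) differentiable (at q)"
  using smooth_on_set_differentiable[OF J_smooth] .
lemma GL_differentiable: "q \<in> U \<Longrightarrow> (\<lambda>p. GL p a b) differentiable (at q)"
  using smooth_on_set_differentiable[OF GL_smooth] .
lemma GD_differentiable: "q \<in> U \<Longrightarrow> (\<lambda>p. GD p a b) differentiable (at q)"
  using smooth_on_set_differentiable[OF GD_smooth] .

lemma is10_cpl_J: "q \<in> U \<Longrightarrow> is10 J q (cpl v (- J q v))"
  unfolding is10_def cext1_def by (simp add: ii_scale_cpl cpl_eq_iff J_J linear_neg[OF J_linear])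

text \<open>In real terms, the (1,1)-part of the torsion \<open>T\<close> is \<open>T(u, v) + T(J u, J v)\<close>.\<close>
lemma GD_torsion_J:
  assumes q: "q \<in> U"
  shows "(GD q a b - GD q b a) + (GD q (J q a) (J q b) - GD q (J q b) (J q a)) = 0"
proof -
  define T where "T = tors_at GD q"
  have T: "T u v = GD q u v - GD q v u" for u v unfolding T_def by (rule tors_at_eq)
  have "cext2 T (cpl a (- J q a)) (cconj (cpl b (- J q b))) = 0"
    using chern q is10_cpl_J[OF q] unfolding chern_connection_def T_def by blast
  then have "T a b - T (- J q a) (J q b) = 0"
    unfolding cext2_def by (simp add: cpl_eq_0_iff)
  moreover have "T (- J q a) (J q b) = - T (J q a) (J q b)"
    unfolding T using bilinear_lneg[OF GD_bilinear[OF q]] bilinear_rneg[OF GD_bilinear[OF q]] by simp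
  ultimately show ?thesis unfolding T by (simp add: algebra_simps)
qed

lemma chern_pointwise_at:
  assumes q: "p \<in> U"
  shows "chern_pointwise (g p) (J p) (GL p) (GD p)"
proof -
  have "g p (GD p u a) b + g p a (GD p u b) = g p (GL p u a) b + g p a (GL p u b)" for u a b
    using metric_compatible_at[OF GD_metric q] metric_compatible_at[OF GL_metric q] by simp
  then show ?thesis
    unfolding chern_pointwise_def
    using g_bilinear[OF q] g_sym[OF q] J_linear[OF q] J_J[OF q] g_J[OF q] GL_bilinear[OF q]
      GD_bilinear[OF q] GD_torsion_J[OF q] levi_civita_symmetric[OF levi_civita q]
    by blast
qed

lemma second_derivative_metric:
  assumes q: "p \<in> U" and met: "metric_compatible U g \<Gamma>" and bil: "\<forall>q\<in>U. bilinear (\<Gamma> q)"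
    and dif: "\<And>a b. (\<lambda>q. \<Gamma> q a b) differentiable (at p)"
  shows "fderiv (\<lambda>q. fderiv (\<lambda>q'. g q' z w) q y) p x =
      g p (\<Gamma> p x (\<Gamma> p y z)) w + g p (\<Gamma> p y z) (\<Gamma> p x w) + g p (fderiv (\<lambda>q. \<Gamma> q y z) p x) w
    + g p (\<Gamma> p x z) (\<Gamma> p y w) + g p z (\<Gamma> p x (\<Gamma> p y w)) + g p z (fderiv (\<lambda>q. \<Gamma> q y w) p x)"
proof -
  have gb: "\<forall>q\<in>U. bilinear (g q)" using g_bilinear by blast
  have gd: "\<And>a b. (\<lambda>q. g q a b) differentiable (at p)" using g_differentiable[OF q] .
  have V1: "((\<lambda>q. \<Gamma> q y z) has_derivative fderiv (\<lambda>q. \<Gamma> q y z) p) (at p)"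
    using dif frechet_derivative_works by blast
  have V2: "((\<lambda>q. \<Gamma> q y w) has_derivative fderiv (\<lambda>q. \<Gamma> q y w) p) (at p)"
    using dif frechet_derivative_works by blast
  have C: "((\<lambda>q. c) has_derivative (\<lambda>_. 0)) (at p)" for c :: "real^'m" by simp
  have D: "((\<lambda>q. g q (\<Gamma> q y z) w + g q z (\<Gamma> q y w)) has_derivative
     (\<lambda>h. (fderiv (\<lambda>q. g q (\<Gamma> p y z) w) p h + g p (fderiv (\<lambda>q. \<Gamma> q y z) p h) w + g p (\<Gamma> p y z) 0)
        + (fderiv (\<lambda>q. g q z (\<Gamma> p y w)) p h + g p 0 (\<Gamma> p y w) + g p z (fderiv (\<lambda>q. \<Gamma> q y w) p h)))) (at p)"
    by (intro has_derivative_add has_derivative_bilinear_family[OF open_U q gb gd V1 C]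
        has_derivative_bilinear_family[OF open_U q gb gd C V2])
  have E: "\<forall>q'\<in>U. fderiv (\<lambda>q. g q z w) q' y = g q' (\<Gamma> q' y z) w + g q' z (\<Gamma> q' y w)"
    using metric_compatible_at[OF met] by blast
  have "frechet_derivative (\<lambda>q. g q (\<Gamma> q y z) w + g q z (\<Gamma> q y w)) (at p)
      = frechet_derivative (\<lambda>q. fderiv (\<lambda>q'. g q' z w) q y) (at p)"
    by (rule frechet_derivative_transform_within_open[OF differentiableI[OF D] open_U q]) (use E in simp)
  then have F: "fderiv (\<lambda>q. fderiv (\<lambda>q'. g q' z w) q y) p x
      = fderiv (\<lambda>q. g q (\<Gamma> q y z) w + g q z (\<Gamma> q y w)) p x"
    by simp
  show ?thesis
    unfolding F fun_cong[OF frechet_derivative_at[OF D, symmetric]]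
    using metric_compatible_at[OF met q] bilinear_lzero[OF g_bilinear[OF q]] bilinear_rzero[OF g_bilinear[OF q]]
    by (simp add: algebra_simps)
qed

lemma second_derivative_metric_symmetric:
  assumes q: "p \<in> U"
  shows "fderiv (\<lambda>q. fderiv (\<lambda>q'. g q' z w) q y) p x = fderiv (\<lambda>q. fderiv (\<lambda>q'. g q' z w) q x) p y"
proof -
  have sm: "smooth_on_set U (\<lambda>q'. g q' z w)" by (rule g_smooth)
  show ?thesis
    by (rule frechet_derivative_second_symmetric[OF open_U q])
      (use smooth_on_set_differentiable[OF sm] smooth_on_set_differentiable_deriv[OF sm]
        smooth_on_set_differentiable_deriv2[OF sm q]
        in \<open>auto intro: differentiable_imp_continuous_within\<close>)
qed

lemma GL_deriv_symmetric:
  assumes q: "p \<in> U"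
  shows "fderiv (\<lambda>q. GL q a b) p u = fderiv (\<lambda>q. GL q b a) p u"
proof -
  have "frechet_derivative (\<lambda>q. GL q a b) (at p) = frechet_derivative (\<lambda>q. GL q b a) (at p)"
    by (rule frechet_derivative_transform_within_open[OF GL_differentiable[OF q] open_U q])
      (use levi_civita_symmetric[OF levi_civita] in blast)
  then show ?thesis by simp
qed

text \<open>The derivative of \<open>GD X (J X) = GD (J X) X\<close>.\<close>
lemma GD_J_commute_deriv:
  assumes q: "p \<in> U"
  shows "fderiv (\<lambda>q. GD q X (J p X)) p u + GD p X (fderiv (\<lambda>q. J q X) p u)
       - (fderiv (\<lambda>q. GD q (J p X) X) p u + GD p (fderiv (\<lambda>q. J q X) p u) X) = 0"
proof -
  have gb: "\<forall>q\<in>U. bilinear (GD q)" using GD_bilinear by blast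
  have gd: "\<And>a b. (\<lambda>q. GD q a b) differentiable (at p)" using GD_differentiable[OF q] .
  have V: "((\<lambda>q. J q X) has_derivative fderiv (\<lambda>q. J q X) p) (at p)"
    using J_differentiable[OF q] frechet_derivative_works by blast
  have C: "((\<lambda>q. X) has_derivative (\<lambda>_. 0)) (at p)" by simp
  have D: "((\<lambda>q. GD q X (J q X) - GD q (J q X) X) has_derivative
     (\<lambda>h. (fderiv (\<lambda>q. GD q X (J p X)) p h + GD p 0 (J p X) + GD p X (fderiv (\<lambda>q. J q X) p h))
        - (fderiv (\<lambda>q. GD q (J p X) X) p h + GD p (fderiv (\<lambda>q. J q X) p h) X + GD p (J p X) 0))) (at p)"
    by (intro has_derivative_diff has_derivative_bilinear_family[OF open_U q gb gd C V]
        has_derivative_bilinear_family[OF open_U q gb gd V C])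
  have Z: "((\<lambda>q. GD q X (J q X) - GD q (J q X) X) has_derivative (\<lambda>_. 0)) (at p)"
  proof (rule has_derivative_transform_within_open[OF _ open_U q])
    show "((\<lambda>q. 0::real^'m) has_derivative (\<lambda>_. 0)) (at p)" by simp
    fix q assume "q \<in> U"
    then show "0 = GD q X (J q X) - GD q (J q X) X"
      using chern_pointwise.chern_J_commute[OF chern_pointwise_at] by simp
  qed
  have "(\<lambda>h. (fderiv (\<lambda>q. GD q X (J p X)) p h + GD p 0 (J p X) + GD p X (fderiv (\<lambda>q. J q X) p h))
        - (fderiv (\<lambda>q. GD q (J p X) X) p h + GD p (fderiv (\<lambda>q. J q X) p h) X + GD p (J p X) 0)) = (\<lambda>_. 0)"
    using has_derivative_unique[OF D Z] .
  from fun_cong[OF this, of u] show ?thesis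
    using bilinear_lzero[OF GD_bilinear[OF q]] bilinear_rzero[OF GD_bilinear[OF q]] by simp
qed

lemma curv4_at_skew_last:
  assumes q: "p \<in> U" and met: "metric_compatible U g \<Gamma>" and bil: "\<forall>q\<in>U. bilinear (\<Gamma> q)"
    and dif: "\<And>a b. (\<lambda>q. \<Gamma> q a b) differentiable (at p)"
  shows "curv4_at g \<Gamma> p x y z w = - curv4_at g \<Gamma> p x y w z"
proof -
  have \<Gamma>b: "bilinear (\<Gamma> p)" using bil q by blast
  have gb: "bilinear (g p)" by (rule g_bilinear[OF q])
  note second = second_derivative_metric[OF q met bil dif]
  show ?thesis
    using second_derivative_metric_symmetric[OF q, of z w y x]
    unfolding second curv4_at_eq[where \<Gamma>=\<Gamma> and p=p, OF \<Gamma>b]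
    by (simp add: bilinear_ladd[OF gb] bilinear_lsub[OF gb] bilinear_radd[OF gb] bilinear_rsub[OF gb]
        g_sym[OF q, of _ z] g_sym[OF q, of _ w])
qed

lemma curv4_at_scale:
  assumes q: "p \<in> U" and bil: "\<forall>q\<in>U. bilinear (\<Gamma> q)"
    and dif: "\<And>a b. (\<lambda>q. \<Gamma> q a b) differentiable (at p)"
  shows "curv4_at g \<Gamma> p (c *\<^sub>R x) y z w = c * curv4_at g \<Gamma> p x y z w"
    and "curv4_at g \<Gamma> p x (c *\<^sub>R y) z w = c * curv4_at g \<Gamma> p x y z w"
    and "curv4_at g \<Gamma> p x y (c *\<^sub>R z) w = c * curv4_at g \<Gamma> p x y z w"
    and "curv4_at g \<Gamma> p x y z (c *\<^sub>R w) = c * curv4_at g \<Gamma> p x y z w"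
proof -
  have bp: "bilinear (\<Gamma> p)" using bil q by blast
  have gb: "bilinear (g p)" using g_bilinear[OF q] .
  note expand = frechet_derivative_bilinear_family[OF open_U q bil dif]
  have da: "fderiv (\<lambda>q. \<Gamma> q (c *\<^sub>R a) b) p h = c *\<^sub>R fderiv (\<lambda>q. \<Gamma> q a b) p h" for a b h c
    unfolding expand[of "c *\<^sub>R a" b h] expand[of a b h] by (simp add: scaleR_sum_right mult.assoc)
  have db: "fderiv (\<lambda>q. \<Gamma> q a (c *\<^sub>R b)) p h = c *\<^sub>R fderiv (\<lambda>q. \<Gamma> q a b) p h" for a b h c
    unfolding expand[of a "c *\<^sub>R b" h] expand[of a b h]
    by (simp add: scaleR_sum_right mult.assoc mult.left_commute)
  have dh: "fderiv (\<lambda>q. \<Gamma> q a b) p (c *\<^sub>R h) = c *\<^sub>R fderiv (\<lambda>q. \<Gamma> q a b) p h" for a b h c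
    using linear_scale[OF linear_frechet_derivative[OF dif]] by blast
  note simps = da db dh bilinear_lmul[OF bp] bilinear_rmul[OF bp] bilinear_lmul[OF gb] bilinear_rmul[OF gb]
    scaleR_right_diff_distrib[symmetric] scaleR_add_right[symmetric]
  show "curv4_at g \<Gamma> p (c *\<^sub>R x) y z w = c * curv4_at g \<Gamma> p x y z w"
    unfolding curv4_at_eq[where \<Gamma>=\<Gamma> and p=p, OF bp] by (simp add: simps)
  show "curv4_at g \<Gamma> p x (c *\<^sub>R y) z w = c * curv4_at g \<Gamma> p x y z w"
    unfolding curv4_at_eq[where \<Gamma>=\<Gamma> and p=p, OF bp] by (simp add: simps)
  show "curv4_at g \<Gamma> p x y (c *\<^sub>R z) w = c * curv4_at g \<Gamma> p x y z w"
    unfolding curv4_at_eq[where \<Gamma>=\<Gamma> and p=p, OF bp] by (simp add: simps)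
  show "curv4_at g \<Gamma> p x y z (c *\<^sub>R w) = c * curv4_at g \<Gamma> p x y z w"
    unfolding curv4_at_eq[where \<Gamma>=\<Gamma> and p=p, OF bp] by (simp add: simps)
qed

lemma cform4_GD_cpl:
  assumes q: "p \<in> U"
  shows "cform4 (curv4_at g GD p) (cpl (s *\<^sub>R X) (- (s *\<^sub>R J p X))) (cconj (cpl (s *\<^sub>R X) (- (s *\<^sub>R J p X))))
      (cpl (s *\<^sub>R X) (- (s *\<^sub>R J p X))) (cconj (cpl (s *\<^sub>R X) (- (s *\<^sub>R J p X))))
    = complex_of_real (4 * s^4 * curv4_at g GD p X (J p X) (J p X) X)"
proof -
  have bp: "bilinear (GD p)" using GD_bilinear[OF q] .
  have gb: "bilinear (g p)" using g_bilinear[OF q] .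
  have GDb: "\<forall>q\<in>U. bilinear (GD q)" using GD_bilinear by blast
  have skew12: "curv4_at g GD p b a c d = - curv4_at g GD p a b c d" for a b c d
    unfolding curv4_at_eq[where \<Gamma>=GD and p=p, OF bp] bilinear_lneg[OF gb, symmetric]
    by (rule arg_cong[where f="\<lambda>v. g p v d"]) (simp add: algebra_simps)
  have skew34: "curv4_at g GD p a b d c = - curv4_at g GD p a b c d" for a b c d
    by (rule curv4_at_skew_last[OF q GD_metric GDb GD_differentiable[OF q]])
  note scale = curv4_at_scale[OF q GDb GD_differentiable[OF q]]
  show ?thesis
  proof (rule cform4_cpl_skew)
    show "curv4_at g GD p X X c d = 0" "curv4_at g GD p (J p X) (J p X) c d = 0" for c d
      using skew12[of X X c d] skew12[of "J p X" "J p X" c d] by simp_all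
    show "curv4_at g GD p a b X X = 0" "curv4_at g GD p a b (J p X) (J p X) = 0" for a b
      using skew34[of a b X X] skew34[of a b "J p X" "J p X"] by simp_all
    show "curv4_at g GD p (J p X) X c d = - curv4_at g GD p X (J p X) c d" for c d
      by (rule skew12)
    show "curv4_at g GD p a b (J p X) X = - curv4_at g GD p a b X (J p X)" for a b
      by (rule skew34)
  qed (fact scale)+
qed

lemma curvature_difference:
  assumes q: "p \<in> U"
  shows "curv4_at g GD p X (J p X) (J p X) X - curv4_at g GL p X (J p X) (J p X) X
     = g p (GD p X X - GL p X X) (GD p (J p X) (J p X) - GL p (J p X) (J p X))
     - g p (GD p X (J p X) - GL p X (J p X)) (GD p X (J p X) - GL p X (J p X))"
proof -
  interpret chern_pointwise "g p" "J p" "GL p" "GD p" by (rule chern_pointwise_at[OF q])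
  show ?thesis
    unfolding curv4_at_eq[where \<Gamma>=GD and p=p, OF GD_bilinear[OF q]]
      curv4_at_eq[where \<Gamma>=GL and p=p, OF GL_bilinear[OF q]] diff_diff_eq[symmetric]
  proof (rule curvature_difference_pointwise[where dD="\<lambda>u a b. fderiv (\<lambda>q. GD q a b) p u"
        and dL="\<lambda>u a b. fderiv (\<lambda>q. GL q a b) p u"])
    show "g p (GD p x (GD p y z)) w + g p (GD p y z) (GD p x w) + g p (fderiv (\<lambda>q. GD q y z) p x) w
         + g p (GD p x z) (GD p y w) + g p z (GD p x (GD p y w)) + g p z (fderiv (\<lambda>q. GD q y w) p x)
       = g p (GL p x (GL p y z)) w + g p (GL p y z) (GL p x w) + g p (fderiv (\<lambda>q. GL q y z) p x) w
         + g p (GL p x z) (GL p y w) + g p z (GL p x (GL p y w)) + g p z (fderiv (\<lambda>q. GL q y w) p x)"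
      for x y z w
      using second_derivative_metric[OF q GD_metric _ GD_differentiable[OF q], of z w y x]
        second_derivative_metric[OF q GL_metric _ GL_differentiable[OF q], of z w y x]
        GD_bilinear GL_bilinear
      by simp
    show "fderiv (\<lambda>q. GD q X (J p X)) p u + GD p X (J p (GD p u X) - GD p u (J p X))
         - (fderiv (\<lambda>q. GD q (J p X) X) p u + GD p (J p (GD p u X) - GD p u (J p X)) X) = 0" for u
      using GD_J_commute_deriv[OF q, of X u] chern_connection_deriv_J[OF chern q, of X u] by simp
    show "fderiv (\<lambda>q. GL q a b) p u = fderiv (\<lambda>q. GL q b a) p u" for u a b
      by (rule GL_deriv_symmetric[OF q])
  qed
qed

end

section \<open>Torsion coefficients in a unitary frame\<close>

locale unitary_frame = chern_levi_civita +
  fixes p :: "real^'m" and n :: nat and e :: "nat \<Rightarrow> complex^'m"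
  assumes p_in_U: "p \<in> U" and card_eq: "CARD('m) = 2 * n"
    and frame_10: "\<forall>i\<in>{1..n}. is10 J p (e i)"
    and frame_unitary: "\<forall>i\<in>{1..n}. \<forall>j\<in>{1..n}. cform2 (g p) (e i) (cconj (e j)) = (if i = j then 1 else 0)"
begin

lemma n_pos: "1 \<le> n"
  using card_eq by (cases n) auto

lemma frame_im_eq:
  assumes "k \<in> {1..n}"
  shows "cim (e k) = - J p (cre (e k))"
proof -
  have "cre (cext1 (J p) (e k)) = cre (\<i> *s e k)"
    using frame_10 assms unfolding is10_def by simp
  then show ?thesis by (simp add: cext1_def cre_scale)
qed

lemma frame_re_im_orthogonal:
  assumes k: "k \<in> {1..n}" and l: "l \<in> {1..n}"
  shows "g p (cre (e k)) (cre (e l)) = (if k = l then 1/2 else 0)"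
    and "g p (cim (e k)) (cim (e l)) = (if k = l then 1/2 else 0)"
    and "g p (cre (e k)) (cim (e l)) = 0"
proof -
  interpret chern_pointwise "g p" "J p" "GL p" "GD p" by (rule chern_pointwise_at[OF p_in_U])
  have c: "cform2 (g p) (e k) (cconj (e l)) = (if k = l then 1 else 0)"
    using frame_unitary k l by blast
  have bb: "g p (cim (e k)) (cim (e l)) = g p (cre (e k)) (cre (e l))"
    unfolding frame_im_eq[OF k] frame_im_eq[OF l] by (simp add: gg_lin gg_JJ)
  have ba: "g p (cim (e k)) (cre (e l)) = - g p (cre (e k)) (cim (e l))"
    unfolding frame_im_eq[OF k] frame_im_eq[OF l] by (simp add: gg_lin g_J_skew)
  from c show "g p (cre (e k)) (cre (e l)) = (if k = l then 1/2 else 0)"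
    and "g p (cre (e k)) (cim (e l)) = 0"
    unfolding cform2_def cre_cconj cim_cconj
    using bb ba bilinear_rneg[OF g_bilinear[OF p_in_U]] by (auto simp: complex_eq_iff split: if_splits)
  with bb show "g p (cim (e k)) (cim (e l)) = (if k = l then 1/2 else 0)" by simp
qed

lemma frame_parseval:
  "g p v v = 2 * (\<Sum>k=1..n. (g p v (cre (e k)))\<^sup>2 + (g p v (cim (e k)))\<^sup>2)"
proof -
  define f where "f = (\<lambda>(k::nat, t::bool). sqrt 2 *\<^sub>R (if t then cim (e k) else cre (e k)))"
  define I where "I = {1..n} \<times> (UNIV :: bool set)"
  have orth: "g p (f x) (f y) = (if x = y then 1 else 0)" if "x \<in> I" "y \<in> I" for x y
  proof -
    obtain k t l u where x: "x = (k, t)" and y: "y = (l, u)" by (cases x, cases y)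
    have k: "k \<in> {1..n}" and l: "l \<in> {1..n}" using that unfolding x y I_def by auto
    have s2: "sqrt 2 * sqrt 2 = (2::real)" by simp
    show ?thesis
      unfolding x y f_def
      using frame_re_im_orthogonal[OF k l] frame_re_im_orthogonal(3)[OF l k]
        g_sym[OF p_in_U, of "cre (e l)" "cim (e k)"] s2
      by (cases t; cases u) (auto simp: bilinear_lmul[OF g_bilinear[OF p_in_U]] bilinear_rmul[OF g_bilinear[OF p_in_U]])
  qed
  have "g p v v = (\<Sum>x\<in>I. (g p v (f x))\<^sup>2)"
    by (rule parseval_orthonormal[OF g_bilinear[OF p_in_U] g_sym[OF p_in_U] _ _ orth])
      (simp_all add: I_def card_cartesian_product card_eq)
  also have "\<dots> = (\<Sum>k=1..n. \<Sum>t\<in>(UNIV::bool set). (g p v (f (k, t)))\<^sup>2)"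
    unfolding I_def by (simp add: sum.cartesian_product)
  also have "\<dots> = (\<Sum>k=1..n. 2 * ((g p v (cre (e k)))\<^sup>2 + (g p v (cim (e k)))\<^sup>2))"
    unfolding f_def by (simp add: UNIV_bool bilinear_rmul[OF g_bilinear[OF p_in_U]] power_mult_distrib)
  finally show ?thesis by (simp add: sum_distrib_left)
qed

text \<open>Pairing with \<open>cconj (e 1)\<close> and with \<open>e 1\<close> picks out the coefficients of \<open>e 1\<close> and
  \<open>cconj (e 1)\<close> in the frame expansion.\<close>
lemma torsion_coeff_sum:
  assumes k: "k \<in> {1..n}"
    and tors: "cext2 (tors_at GD p) (e k) (e 1) = (\<Sum>l=1..n. tc l *s e l + tcb l *s cconj (e l))"
  shows "tc 1 + tcb 1 = cform2 (g p) (cext2 (tors_at GD p) (e k) (e 1)) (cconj (e 1))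
    + cform2 (g p) (cext2 (tors_at GD p) (e k) (e 1)) (e 1)"
proof -
  define \<Phi> where "\<Phi> z = cform2 (g p) z (cconj (e 1)) + cform2 (g p) z (e 1)" for z
  have gb: "bilinear (g p)" by (rule g_bilinear[OF p_in_U])
  have one: "(1::nat) \<in> {1..n}" using n_pos by simp
  have \<Phi>e: "\<Phi> (e l) = (if l = 1 then 1 else 0)" if l: "l \<in> {1..n}" for l
  proof -
    have "cform2 (g p) (e l) (e 1) = 0"
      unfolding cform2_def
      using frame_re_im_orthogonal[OF l one] frame_re_im_orthogonal(3)[OF one l]
        g_sym[OF p_in_U, of "cim (e l)" "cre (e 1)"]
      by (simp add: complex_eq_iff)
    then show ?thesis using frame_unitary l one unfolding \<Phi>_def by simp
  qed
  have \<Phi>ce: "\<Phi> (cconj (e l)) = (if l = 1 then 1 else 0)" if l: "l \<in> {1..n}" for l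
    unfolding \<Phi>_def cform2_def cre_cconj cim_cconj
    using frame_re_im_orthogonal[OF l one] frame_re_im_orthogonal(3)[OF one l]
      g_sym[OF p_in_U, of "cim (e l)" "cre (e 1)"]
    by (simp add: complex_eq_iff bilinear_lneg[OF gb] bilinear_rneg[OF gb])
  have "\<Phi> (\<Sum>l=1..n. tc l *s e l + tcb l *s cconj (e l)) = (\<Sum>l=1..n. tc l * \<Phi> (e l) + tcb l * \<Phi> (cconj (e l)))"
    unfolding \<Phi>_def cform2_sum[OF gb] cform2_add[OF gb] cform2_scale[OF gb]
    by (simp add: sum.distrib algebra_simps)
  also have "\<dots> = (\<Sum>l=1..n. if l = 1 then tc 1 + tcb 1 else 0)"
    by (rule sum.cong) (auto simp: \<Phi>e \<Phi>ce)
  also have "\<dots> = tc 1 + tcb 1" using one by simp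
  finally show ?thesis unfolding tors \<Phi>_def by simp
qed

lemma torsion_pairing_e1:
  assumes k: "k \<in> {1..n}" and e1: "e 1 = cpl ((1 / sqrt 2) *\<^sub>R X) (- ((1 / sqrt 2) *\<^sub>R J p X))"
  defines "P \<equiv> GD p X X - GL p X X"
  shows "cform2 (g p) (cext2 (tors_at GD p) (e k) (e 1)) (cconj (e 1))
      + cform2 (g p) (cext2 (tors_at GD p) (e k) (e 1)) (e 1)
    = Complex (2 * g p P (cre (e k))) (2 * g p P (cim (e k)))"
proof -
  interpret chern_pointwise "g p" "J p" "GL p" "GD p" by (rule chern_pointwise_at[OF p_in_U])
  define s :: real where "s = 1 / sqrt 2"
  define Y where "Y = J p X"
  define T where "T = tors_at GD p"
  have s2: "2 * s * s = 1" unfolding s_def by (simp add: field_simps)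
  have T: "T u v = GD p u v - GD p v u" for u v unfolding T_def by (rule tors_at_eq)
  have Tl: "T (- u) v = - T u v" "T u (- v) = - T u v" "T (c *\<^sub>R u) v = c *\<^sub>R T u v"
    "T u (c *\<^sub>R v) = c *\<^sub>R T u v" for u v c
    unfolding T by (simp_all add: \<Gamma>_lin algebra_simps)
  have f1: "g p (T u X) X = g p P u" for u
    using g_torsion_self[of X u] gg_sym[of "T u X" X] unfolding T P_def by (simp add: gg_lin)
  have f2: "g p (T u Y) X = g p P (J p u)" for u
    using g_torsion_J_self[of X u] gg_sym[of "T u Y" X] unfolding T P_def Y_def by (simp add: gg_lin)
  have f3: "T (- J p u) Y = T u X" for u
    using torsion_J[of u X] unfolding T Y_def by (simp add: \<Gamma>_lin)
  have f4: "T (- J p u) X = - T u Y" for u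
    using torsion_J[of "J p u" X] unfolding T Y_def by (simp add: \<Gamma>_lin JJ_JJ) (metis minus_diff_eq)
  have a1: "cre (e 1) = s *\<^sub>R X" and b1: "cim (e 1) = - (s *\<^sub>R Y)"
    unfolding e1 s_def Y_def by simp_all
  have bk: "cim (e k) = - J p (cre (e k))" by (rule frame_im_eq[OF k])
  have "cform2 (g p) (cext2 T (e k) (e 1)) (cconj (e 1)) + cform2 (g p) (cext2 T (e k) (e 1)) (e 1)
      = Complex (2 * s * s * (g p (T (cre (e k)) X) X + g p (T (cim (e k)) Y) X))
          (2 * s * s * (g p (T (cim (e k)) X) X - g p (T (cre (e k)) Y) X))"
    unfolding cext2_def cform2_def cre_cconj cim_cconj cre_cpl cim_cpl a1 b1
    by (simp add: Tl gg_lin complex_eq_iff algebra_simps)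
  also have "\<dots> = Complex (2 * g p P (cre (e k))) (2 * g p P (cim (e k)))"
    unfolding s2 bk f3 f4 f1 f2 by (simp add: gg_lin JJ_JJ f2)
  finally show ?thesis unfolding T_def .
qed

lemma torsion_sum_eq:
  assumes e1: "e 1 = cpl ((1 / sqrt 2) *\<^sub>R X) (- ((1 / sqrt 2) *\<^sub>R J p X))"
    and tors: "\<forall>i\<in>{1..n}. \<forall>j\<in>{1..n}. cext2 (tors_at GD p) (e i) (e j)
           = (\<Sum>k=1..n. tc i j k *s e k + tcb i j k *s cconj (e k))"
  defines "P \<equiv> GD p X X - GL p X X"
  shows "(\<Sum>i=2..n. (cmod (tc i 1 1 + tcb i 1 1))^2) = 2 * g p P P"
proof -
  interpret chern_pointwise "g p" "J p" "GL p" "GD p" by (rule chern_pointwise_at[OF p_in_U])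
  have one: "(1::nat) \<in> {1..n}" using n_pos by simp
  have summand: "(cmod (tc k 1 1 + tcb k 1 1))\<^sup>2 = 4 * ((g p P (cre (e k)))\<^sup>2 + (g p P (cim (e k)))\<^sup>2)"
    if k: "k \<in> {1..n}" for k
  proof -
    have "tc k 1 1 + tcb k 1 1 = Complex (2 * g p P (cre (e k))) (2 * g p P (cim (e k)))"
      using torsion_coeff_sum[OF k, of "tc k 1" "tcb k 1"] torsion_pairing_e1[OF k e1] tors k one
      unfolding P_def by simp
    then show ?thesis by (simp add: cmod_power2 power_mult_distrib)
  qed
  have first: "(cmod (tc 1 1 1 + tcb 1 1 1))\<^sup>2 = 0"
    using summand[OF one] g_difference_self[of X] g_difference_J_self[of X]
    unfolding e1 P_def by (simp add: gg_lin)
  have "(\<Sum>i=1..n. (cmod (tc i 1 1 + tcb i 1 1))^2)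
      = (\<Sum>i=1..n. 4 * ((g p P (cre (e i)))\<^sup>2 + (g p P (cim (e i)))\<^sup>2))"
    by (rule sum.cong[OF refl]) (rule summand)
  also have "\<dots> = 4 * (\<Sum>i=1..n. (g p P (cre (e i)))\<^sup>2 + (g p P (cim (e i)))\<^sup>2)"
    by (rule sum_distrib_left[symmetric])
  also have "\<dots> = 2 * g p P P" using frame_parseval[of P] by simp
  finally show ?thesis
    using sum.atLeast_Suc_atMost[OF n_pos, of "\<lambda>i. (cmod (tc i 1 1 + tcb i 1 1))^2"] first
    by (simp add: numeral_2_eq_2)
qed

end

theorem lemma2p3:
  fixes U :: "(real^'m) set"
    and J :: "real^'m \<Rightarrow> real^'m \<Rightarrow> real^'m"
    and g :: "real^'m \<Rightarrow> real^'m \<Rightarrow> real^'m \<Rightarrow> real"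
    and \<Gamma>L \<Gamma>D :: "real^'m \<Rightarrow> real^'m \<Rightarrow> real^'m \<Rightarrow> real^'m"
    and n :: nat and p X :: "real^'m"
    and e :: "nat \<Rightarrow> complex^'m"
    and tc tcb :: "nat \<Rightarrow> nat \<Rightarrow> nat \<Rightarrow> complex"
  assumes "CARD('m) = 2 * n"
    and "almost_hermitian U J g"
    and "levi_civita U g \<Gamma>L"
    and "chern_connection U J g \<Gamma>D"
    and "p \<in> U"
    and "g p X X = 1"
    and "e 1 = cpl ((1 / sqrt 2) *\<^sub>R X) (- ((1 / sqrt 2) *\<^sub>R J p X))"
    and "\<forall>i\<in>{1..n}. is10 J p (e i)"
    and "\<forall>i\<in>{1..n}. \<forall>j\<in>{1..n}. cform2 (g p) (e i) (cconj (e j)) = (if i = j then 1 else 0)"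
    and "\<forall>i\<in>{1..n}. \<forall>j\<in>{1..n}. cext2 (tors_at \<Gamma>D p) (e i) (e j)
           = (\<Sum>k=1..n. tc i j k *s e k + tcb i j k *s cconj (e k))"
  shows "cform4 (curv4_at g \<Gamma>D p) (e 1) (cconj (e 1)) (e 1) (cconj (e 1))
           - complex_of_real (\<Sum>i=2..n. (cmod (tc i 1 1 + tcb i 1 1))^2)
         = complex_of_real (curv4_at g \<Gamma>L p X (J p X) (J p X) X
             - (let v = cov \<Gamma>L (\<lambda>_. X) (\<lambda>q. J q X) p - J p (cov \<Gamma>L (\<lambda>_. X) (\<lambda>_. X) p)
                in g p v v))"
proof -
  interpret unitary_frame U J g \<Gamma>L \<Gamma>D p n e
    using assms(1-5,8,9) by unfold_locales
  interpret chern_pointwise "g p" "J p" "\<Gamma>L p" "\<Gamma>D p" by (rule chern_pointwise_at[OF assms(5)])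
  define P where "P = \<Gamma>D p X X - \<Gamma>L p X X"
  define R where "R = \<Gamma>D p X (J p X) - \<Gamma>L p X (J p X)"
  have "(sqrt 2 :: real) ^ 4 = 4"
    using power_mult[of "sqrt 2 :: real" 2 2] by simp
  then have "4 * (1 / sqrt 2) ^ 4 = (1::real)"
    by (simp add: power_divide)
  then have R_11: "cform4 (curv4_at g \<Gamma>D p) (e 1) (cconj (e 1)) (e 1) (cconj (e 1))
      = complex_of_real (curv4_at g \<Gamma>D p X (J p X) (J p X) X)"
    unfolding assms(7) cform4_GD_cpl[OF assms(5)] by simp
  have nabla_J: "cov \<Gamma>L (\<lambda>_. X) (\<lambda>q. J q X) p - J p (cov \<Gamma>L (\<lambda>_. X) (\<lambda>_. X) p) = J p P - R"
    unfolding cov_def P_def R_def chern_connection_deriv_J[OF assms(4,5)] by (simp add: JJ_lin)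
  have "curv4_at g \<Gamma>D p X (J p X) (J p X) X - 2 * g p P P
      = curv4_at g \<Gamma>L p X (J p X) (J p X) X - g p (J p P - R) (J p P - R)"
    using curvature_difference[OF assms(5), of X] g_J_difference_minus_difference[of X]
    unfolding P_def R_def by simp
  from arg_cong[OF this, of complex_of_real] show ?thesis
    unfolding R_11 torsion_sum_eq[OF assms(7,10)] P_def[symmetric] Let_def nabla_J by simp
qed

end
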